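(* Suppose $M$ is a countable descendant-homogeneous digraph, and let $\mathcal C$ be the class of digraphs isomorphic to finitely generated descendant-closed subdigraphs of $M$. Then: (1) $\mathcal C$ is a class of countable, finitely generated digraphs, closed under isomorphism, with countably many isomorphism types; (2) $\mathcal C$ is closed under taking finitely generated descendant-closed subdigraphs; (3) $\mathcal C$ has the $\le$-amalgamation property; (4) for all $A,B\in\mathcal C$ there are only countably many isomorphism types of $\le$-embeddings from $A$ to $B$. Conversely, if $\mathcal C$ is a class of digraphs satisfying (1)–(4), then there is a countable descendant-homogeneous digraph $M$ such that the class of digraphs isomorphic to finitely generated descendant-closed subdigraphs of $M$ equals $\mathcal C$; moreover $M$ is determined up to isomorphism by $\mathcal C$.
   Context: Digraphs have vertex set $VD$ and directed edge set $ED$; subdigraphs are full induced subdigraphs and embeddings are onto induced subdigraphs. For $s\ge0$, an $s$-arc from $u_0$ to $u_s$ is a sequence $u_0\ldots u_s$ with $(u_i,u_{i+1})\in ED$ for $0\le i<s$ and $u_{i-1}\ne u_{i+1}$ for $0<i<s$; ${\rm desc}(u)$ is the set of vertices reachable from $u$ by an $s$-arc for some $s\ge0$, and ${\rm desc}(X)=\bigcup_{x\in X}{\rm desc}(x)$. $A\subseteq D$ is descendant-closed ($A\le D$) if ${\rm desc}_D(a)\subseteq A$ for all $a\in A$, and finitely generated if $A={\rm desc}_D(X)$ for some finite $X$; a digraph is finitely generated if it is generated in this sense by a finite set of its vertices. A $\le$-embedding is an embedding $f:A\to B$ with $f(A)\le B$. Two $\le$-embeddings $f_i:A\to B_i$ ($i=1,2$)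 are isomorphic if there is an isomorphism $h:B_1\to B_2$ with $f_2=h\circ f_1$. A class $\mathcal C$ has the $\le$-amalgamation property if whenever $A,B_1,B_2\in\mathcal C$ and $f_i:A\to B_i$ are $\le$-embeddings, there are $C\in\mathcal C$ and $\le$-embeddings $g_i:B_i\to C$ with $g_1\circ f_1=g_2\circ f_2$. A countable digraph is descendant-homogeneous if every isomorphism between finitely generated descendant-closed subdigraphs extends to an automorphism. *)

theory Defs
  imports Main "HOL-Library.Countable_Set"
begin

type_synonym 'a digraph = "'a set \<times> ('a \<times> 'a) set"

definition verts :: "'a digraph \<Rightarrow> 'a set" where "verts D = fst D"
definition edges :: "'a digraph \<Rightarrow> ('a \<times> 'a) set" where "edges D = snd D"

definition wf_digraph :: "'a digraph \<Rightarrow> bool" where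
  "wf_digraph D \<longleftrightarrow> edges D \<subseteq> verts D \<times> verts D \<and> (\<forall>x. (x, x) \<notin> edges D)"

definition induced :: "'a digraph \<Rightarrow> 'a set \<Rightarrow> 'a digraph" where
  "induced D A = (A, edges D \<inter> (A \<times> A))"

text \<open>An s-arc u_0 ... u_s, represented as the nonempty list [u_0, ..., u_s].\<close>
definition s_arc :: "'a digraph \<Rightarrow> 'a list \<Rightarrow> bool" where
  "s_arc D p \<longleftrightarrow> p \<noteq> [] \<and> set p \<subseteq> verts D
     \<and> (\<forall>i. Suc i < length p \<longrightarrow> (p ! i, p ! Suc i) \<in> edges D)
     \<and> (\<forall>i. Suc (Suc i) < length p \<longrightarrow> p ! i \<noteq> p ! Suc (Suc i))"

definition desc :: "'a digraph \<Rightarrow> 'a \<Rightarrow> 'a set" where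
  "desc D u = {last p | p. s_arc D p \<and> hd p = u}"

definition desc_set :: "'a digraph \<Rightarrow> 'a set \<Rightarrow> 'a set" where
  "desc_set D X = (\<Union>x\<in>X. desc D x)"

definition desc_closed :: "'a set \<Rightarrow> 'a digraph \<Rightarrow> bool" where
  "desc_closed A D \<longleftrightarrow> A \<subseteq> verts D \<and> (\<forall>a\<in>A. desc D a \<subseteq> A)"

definition fg_dc :: "'a digraph \<Rightarrow> 'a set \<Rightarrow> bool" where
  "fg_dc D A \<longleftrightarrow> desc_closed A D \<and> (\<exists>X. finite X \<and> X \<subseteq> verts D \<and> A = desc_set D X)"

definition fin_gen :: "'a digraph \<Rightarrow> bool" where
  "fin_gen D \<longleftrightarrow> (\<exists>X. finite X \<and> X \<subseteq> verts D \<and> verts D = desc_set D X)"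

definition dg_iso :: "('a \<Rightarrow> 'b) \<Rightarrow> 'a digraph \<Rightarrow> 'b digraph \<Rightarrow> bool" where
  "dg_iso f D1 D2 \<longleftrightarrow> bij_betw f (verts D1) (verts D2)
     \<and> (\<forall>x\<in>verts D1. \<forall>y\<in>verts D1. (x, y) \<in> edges D1 \<longleftrightarrow> (f x, f y) \<in> edges D2)"

definition isomorphic :: "'a digraph \<Rightarrow> 'b digraph \<Rightarrow> bool" where
  "isomorphic D1 D2 \<longleftrightarrow> (\<exists>f. dg_iso f D1 D2)"

definition embedding :: "('a \<Rightarrow> 'b) \<Rightarrow> 'a digraph \<Rightarrow> 'b digraph \<Rightarrow> bool" where
  "embedding f A B \<longleftrightarrow> inj_on f (verts A) \<and> f ` verts A \<subseteq> verts B
     \<and> (\<forall>x\<in>verts A. \<forall>y\<in>verts A. (x, y) \<in> edges A \<longleftrightarrow> (f x, f y) \<in> edges B)"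

definition le_emb :: "('a \<Rightarrow> 'b) \<Rightarrow> 'a digraph \<Rightarrow> 'b digraph \<Rightarrow> bool" where
  "le_emb f A B \<longleftrightarrow> embedding f A B \<and> desc_closed (f ` verts A) B"

definition emb_iso :: "'a digraph \<Rightarrow> ('a \<Rightarrow> 'b) \<Rightarrow> 'b digraph \<Rightarrow> ('a \<Rightarrow> 'b) \<Rightarrow> 'b digraph \<Rightarrow> bool" where
  "emb_iso A f1 B1 f2 B2 \<longleftrightarrow> (\<exists>h. dg_iso h B1 B2 \<and> (\<forall>x\<in>verts A. f2 x = h (f1 x)))"

definition desc_homogeneous :: "'a digraph \<Rightarrow> bool" where
  "desc_homogeneous M \<longleftrightarrow> wf_digraph M \<and> countable (verts M) \<and>
     (\<forall>A B f. fg_dc M A \<and> fg_dc M B \<and> dg_iso f (induced M A) (induced M B) \<longrightarrow>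
        (\<exists>g. dg_iso g M M \<and> (\<forall>x\<in>A. g x = f x)))"

text \<open>Classes of (countable) digraphs are represented on the countably infinite carrier type nat.\<close>
definition age_dh :: "'a digraph \<Rightarrow> nat digraph set" where
  "age_dh M = {D. wf_digraph D \<and> (\<exists>A. fg_dc M A \<and> isomorphic D (induced M A))}"

definition iso_types :: "nat digraph set \<Rightarrow> nat digraph set set" where
  "iso_types C = {{D'\<in>C. isomorphic D D'} | D. D \<in> C}"

definition emb_types :: "nat digraph \<Rightarrow> nat digraph \<Rightarrow> (nat \<Rightarrow> nat) set set" where
  "emb_types A B = {{g. le_emb g A B \<and> emb_iso A f B g B} | f. le_emb f A B}"

definition cond1 :: "nat digraph set \<Rightarrow> bool" where
  "cond1 C \<longleftrightarrow> (\<forall>D\<in>C. wf_digraph D \<and> countable (verts D) \<and> fin_gen D)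
     \<and> (\<forall>D\<in>C. \<forall>D'. wf_digraph D' \<and> isomorphic D D' \<longrightarrow> D' \<in> C)
     \<and> countable (iso_types C)"

definition cond2 :: "nat digraph set \<Rightarrow> bool" where
  "cond2 C \<longleftrightarrow> (\<forall>D\<in>C. \<forall>A. fg_dc D A \<longrightarrow> induced D A \<in> C)"

definition cond3 :: "nat digraph set \<Rightarrow> bool" where
  "cond3 C \<longleftrightarrow> (\<forall>A\<in>C. \<forall>B1\<in>C. \<forall>B2\<in>C. \<forall>f1 f2. le_emb f1 A B1 \<and> le_emb f2 A B2 \<longrightarrow>
      (\<exists>E\<in>C. \<exists>g1 g2. le_emb g1 B1 E \<and> le_emb g2 B2 E \<and>
          (\<forall>x\<in>verts A. g1 (f1 x) = g2 (f2 x))))"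

definition cond4 :: "nat digraph set \<Rightarrow> bool" where
  "cond4 C \<longleftrightarrow> (\<forall>A\<in>C. \<forall>B\<in>C. countable (emb_types A B))"

end

theory Submission
  imports Defs
begin

text \<open>The age of a countable descendant-homogeneous digraph \<open>M\<close> inherits conditions (1)--(4) from
  \<open>M\<close>: amalgamation comes from an automorphism of \<open>M\<close> identifying the two copies of \<open>A\<close>, and a
  \<open>\<le>\<close>-embedding \<open>A \<rightarrow> B\<close> is determined up to isomorphism by a finitely generated
  descendant-closed subset of \<open>M\<close>, of which there are countably many. Conversely, given such a
  class \<open>C\<close>, enumerate all pairs of an isomorphism type \<open>B \<in> C\<close> and an embedding type of a finitely
  generated descendant-closed part of the current digraph into \<open>B\<close>, and build a chain in \<open>C\<close>
  handling each pair infinitely often by amalgamation. The union \<open>M\<close> of the chain realises every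
  such extension; a back-and-forth argument then shows that \<open>M\<close> is descendant-homogeneous and
  that any two countable descendant-homogeneous digraphs with the same age are isomorphic.\<close>

section \<open>Descendants as reachability\<close>

definition arc_rel :: "'a digraph \<Rightarrow> ('a \<times> 'a) set" where
  "arc_rel D = edges D \<inter> (verts D \<times> verts D)"

lemma s_arc_take:
  assumes "s_arc D p" "0 < k" "k \<le> length p"
  shows "s_arc D (take k p)"
  using assms unfolding s_arc_def
  by (auto simp: nth_take dest: in_set_takeD)

lemma s_arc_nth_rtrancl:
  assumes "s_arc D p"
  shows "k < length p \<Longrightarrow> (hd p, p ! k) \<in> (arc_rel D)\<^sup>*"
proof (induction k)
  case 0
  then show ?case using assms by (simp add: hd_conv_nth s_arc_def)
next
  case (Suc k)
  have e: "(p ! k, p ! Suc k) \<in> edges D" using assms Suc.prems by (simp add: s_arc_def)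
  have "p ! k \<in> verts D" "p ! Suc k \<in> verts D"
    using assms Suc.prems unfolding s_arc_def by (meson Suc_lessD nth_mem subsetD)+
  then have "(p ! k, p ! Suc k) \<in> arc_rel D" using e by (simp add: arc_rel_def)
  then show ?case using Suc by (meson Suc_lessD rtrancl.rtrancl_into_rtrancl)
qed

lemma s_arc_rtrancl:
  assumes "s_arc D p"
  shows "(hd p, last p) \<in> (arc_rel D)\<^sup>*"
proof -
  have "p \<noteq> []" using assms by (simp add: s_arc_def)
  then show ?thesis using s_arc_nth_rtrancl[OF assms, of "length p - 1"]
    by (simp add: last_conv_nth)
qed

lemma s_arc_snoc:
  assumes p: "s_arc D p" and z: "(last p, z) \<in> edges D" "z \<in> verts D" "z \<notin> set p"
  shows "s_arc D (p @ [z])"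
  unfolding s_arc_def
proof (intro conjI allI impI)
  have pne: "p \<noteq> []" using p by (simp add: s_arc_def)
  show "p @ [z] \<noteq> []" by simp
  show "set (p @ [z]) \<subseteq> verts D" using p z by (auto simp: s_arc_def)
  fix i
  show "((p @ [z]) ! i, (p @ [z]) ! Suc i) \<in> edges D" if i: "Suc i < length (p @ [z])"
  proof (cases "Suc i < length p")
    case True then show ?thesis using p by (simp add: nth_append s_arc_def)
  next
    case False
    then have "i = length p - 1" using i by simp
    then show ?thesis using z pne by (simp add: nth_append last_conv_nth)
  qed
  show "(p @ [z]) ! i \<noteq> (p @ [z]) ! Suc (Suc i)" if i: "Suc (Suc i) < length (p @ [z])"
  proof (cases "Suc (Suc i) < length p")
    case True then show ?thesis using p by (simp add: nth_append s_arc_def)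
  next
    case False
    then have "Suc (Suc i) = length p" using i by simp
    then show ?thesis using z(3) by (simp add: nth_append) (metis lessI less_SucI nth_mem)
  qed
qed

text \<open>Shortcutting at the first return to a vertex keeps the walk an s-arc, so every
  reachable vertex is reached by an s-arc.\<close>

lemma rtrancl_imp_s_arc:
  assumes "(x, y) \<in> (arc_rel D)\<^sup>*" "x \<in> verts D"
  shows "\<exists>p. s_arc D p \<and> hd p = x \<and> last p = y \<and> distinct p"
  using assms(1)
proof (induction rule: rtrancl_induct)
  case base
  then show ?case using assms(2) by (intro exI[of _ "[x]"]) (simp add: s_arc_def)
next
  case (step y z)
  then obtain p where p: "s_arc D p" "hd p = x" "last p = y" "distinct p" by blast
  have yz: "(y, z) \<in> edges D" "z \<in> verts D" using step(2) by (auto simp: arc_rel_def)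
  have pne: "p \<noteq> []" using p by (simp add: s_arc_def)
  show ?case
  proof (cases "z \<in> set p")
    case True
    then obtain k where k: "k < length p" "p ! k = z" by (meson in_set_conv_nth)
    have "s_arc D (take (Suc k) p)" using s_arc_take[OF p(1)] k by simp
    moreover have "last (take (Suc k) p) = z" using k by (simp add: take_Suc_conv_app_nth)
    ultimately show ?thesis using p pne by (intro exI[of _ "take (Suc k) p"]) simp
  next
    case False
    then show ?thesis using s_arc_snoc[OF p(1)] p yz pne by (intro exI[of _ "p @ [z]"]) simp
  qed
qed

lemma desc_eq_rtrancl: "desc D x = (if x \<in> verts D then (arc_rel D)\<^sup>* `` {x} else {})"
proof -
  have hd_verts: "s_arc D p \<Longrightarrow> hd p \<in> verts D" for p
    unfolding s_arc_def by (metis hd_in_set subsetD)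
  show ?thesis
  proof (cases "x \<in> verts D")
    case True
    have "desc D x \<subseteq> (arc_rel D)\<^sup>* `` {x}"
      unfolding desc_def using s_arc_rtrancl by fastforce
    moreover have "(arc_rel D)\<^sup>* `` {x} \<subseteq> desc D x"
    proof
      fix y assume "y \<in> (arc_rel D)\<^sup>* `` {x}"
      then obtain p where "s_arc D p" "hd p = x" "last p = y" using rtrancl_imp_s_arc[OF _ True] by blast
      then show "y \<in> desc D x" unfolding desc_def by blast
    qed
    ultimately show ?thesis using True by auto
  next
    case False
    then show ?thesis unfolding desc_def using hd_verts by auto
  qed
qed

lemma verts_induced[simp]: "verts (induced D A) = A" by (simp add: induced_def verts_def)
lemma edges_induced[simp]: "edges (induced D A) = edges D \<inter> (A \<times> A)" by (simp add: induced_def edges_def)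
lemma arc_rel_subset: "arc_rel D \<subseteq> verts D \<times> verts D" by (auto simp: arc_rel_def)

lemma rtrancl_stays_in: assumes "R \<subseteq> V \<times> V" "(x, y) \<in> R\<^sup>*" "x \<in> V" shows "y \<in> V"
  using assms(2,3) by (induction rule: rtrancl_induct) (use assms(1) in auto)

lemma desc_subset_verts: "desc D x \<subseteq> verts D"
  using rtrancl_stays_in[OF arc_rel_subset[of D], of x] by (auto simp: desc_eq_rtrancl)

lemma desc_refl: "x \<in> verts D \<Longrightarrow> x \<in> desc D x"
  by (simp add: desc_eq_rtrancl)

lemma desc_trans: "y \<in> desc D x \<Longrightarrow> desc D y \<subseteq> desc D x"
  using desc_subset_verts[of D x] by (auto simp: desc_eq_rtrancl split: if_splits intro: rtrancl_trans)

lemma desc_set_subset_verts: "desc_set D X \<subseteq> verts D"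
  unfolding desc_set_def using desc_subset_verts[of D] by blast

lemma desc_closed_desc_set: "desc_closed (desc_set D X) D"
proof -
  have "\<forall>a\<in>desc_set D X. desc D a \<subseteq> desc_set D X"
  proof
    fix a assume "a \<in> desc_set D X"
    then obtain x where "x \<in> X" "a \<in> desc D x" unfolding desc_set_def by blast
    then show "desc D a \<subseteq> desc_set D X" using desc_trans[of a D x] unfolding desc_set_def by blast
  qed
  then show ?thesis unfolding desc_closed_def using desc_set_subset_verts[of D X] by blast
qed

lemma desc_set_superset: "X \<subseteq> verts D \<Longrightarrow> X \<subseteq> desc_set D X"
  unfolding desc_set_def using desc_refl[of _ D] by blast

lemma desc_set_Un: "desc_set D (X \<union> Y) = desc_set D X \<union> desc_set D Y"
  by (auto simp: desc_set_def)

lemma desc_set_image: "desc_set D (g ` X) = (\<Union>x\<in>X. desc D (g x))"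
  by (auto simp: desc_set_def)

lemma fg_dc_iff: "fg_dc D A \<longleftrightarrow> (\<exists>X. finite X \<and> X \<subseteq> verts D \<and> A = desc_set D X)"
  unfolding fg_dc_def using desc_closed_desc_set[of D] by metis

lemma fg_dc_empty: "fg_dc D {}"
  unfolding fg_dc_iff by (rule exI[of _ "{}"]) (simp add: desc_set_def)

lemma fg_dc_Un: "fg_dc D A \<Longrightarrow> fg_dc D B \<Longrightarrow> fg_dc D (A \<union> B)"
  unfolding fg_dc_iff by (metis desc_set_Un finite_UnI le_sup_iff)

lemma fg_dc_subset_verts: "fg_dc D A \<Longrightarrow> A \<subseteq> verts D"
  unfolding fg_dc_def desc_closed_def by blast

lemma fg_dc_desc_closed: "fg_dc D A \<Longrightarrow> desc_closed A D"
  unfolding fg_dc_def by blast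

lemma desc_closed_subset_verts: "desc_closed A D \<Longrightarrow> A \<subseteq> verts D"
  unfolding desc_closed_def by blast

lemma desc_closed_desc: "desc_closed A D \<Longrightarrow> a \<in> A \<Longrightarrow> desc D a \<subseteq> A"
  unfolding desc_closed_def by blast

lemma arc_rel_induced: "A \<subseteq> verts D \<Longrightarrow> arc_rel (induced D A) = arc_rel D \<inter> (A \<times> A)"
  by (auto simp: arc_rel_def)

lemma desc_induced_subset: "A \<subseteq> verts D \<Longrightarrow> desc (induced D A) x \<subseteq> desc D x"
proof -
  assume A: "A \<subseteq> verts D"
  have "(arc_rel D \<inter> A \<times> A)\<^sup>* \<subseteq> (arc_rel D)\<^sup>*" by (simp add: rtrancl_mono)
  then show ?thesis using A by (auto simp: desc_eq_rtrancl arc_rel_induced)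
qed

lemma rtrancl_restrict_Image:
  assumes "R\<^sup>* `` {a} \<subseteq> A" "a \<in> A"
  shows "(R \<inter> A \<times> A)\<^sup>* `` {a} = R\<^sup>* `` {a}"
proof
  show "(R \<inter> A \<times> A)\<^sup>* `` {a} \<subseteq> R\<^sup>* `` {a}" using rtrancl_mono[of "R \<inter> A \<times> A" R] by auto
  show "R\<^sup>* `` {a} \<subseteq> (R \<inter> A \<times> A)\<^sup>* `` {a}"
  proof
    fix y assume "y \<in> R\<^sup>* `` {a}"
    then have "(a, y) \<in> R\<^sup>*" by simp
    then have "(a, y) \<in> (R \<inter> A \<times> A)\<^sup>*"
    proof (induction rule: rtrancl_induct)
      case base then show ?case by simp
    next
      case (step y z)
      have "y \<in> A" "z \<in> A" using step assms by auto
      then show ?case using step by (meson IntI SigmaI rtrancl.rtrancl_into_rtrancl)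
    qed
    then show "y \<in> (R \<inter> A \<times> A)\<^sup>* `` {a}" by simp
  qed
qed

lemma desc_induced_desc_closed:
  assumes "desc_closed A D" "a \<in> A"
  shows "desc (induced D A) a = desc D a"
proof -
  have A: "A \<subseteq> verts D" using desc_closed_subset_verts[OF assms(1)] .
  have "(arc_rel D)\<^sup>* `` {a} \<subseteq> A" using assms A desc_closed_desc[OF assms] by (simp add: desc_eq_rtrancl subset_iff)
  then show ?thesis using assms A rtrancl_restrict_Image[of "arc_rel D" a A] by (auto simp: desc_eq_rtrancl arc_rel_induced)
qed

lemma desc_set_induced_desc_closed:
  "desc_closed A D \<Longrightarrow> X \<subseteq> A \<Longrightarrow> desc_set (induced D A) X = desc_set D X"
  unfolding desc_set_def using desc_induced_desc_closed[of A D] by (metis (no_types, lifting) SUP_cong subsetD)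

lemma desc_closed_induced:
  assumes "desc_closed B D" "B \<subseteq> A" "A \<subseteq> verts D"
  shows "desc_closed B (induced D A)"
  using assms desc_induced_subset[OF assms(3)] unfolding desc_closed_def by (simp add: subset_iff)

lemma fg_dc_induced:
  assumes "desc_closed A D" "fg_dc D B" "B \<subseteq> A"
  shows "fg_dc (induced D A) B"
proof -
  obtain X where X: "finite X" "X \<subseteq> verts D" "B = desc_set D X" using assms(2) fg_dc_iff[of D B] by blast
  have "X \<subseteq> B" using X desc_set_superset[of X D] by simp
  then show ?thesis unfolding fg_dc_iff using X assms desc_set_induced_desc_closed[OF assms(1), of X]
    by (intro exI[of _ X]) auto
qed

lemma fg_dc_from_induced:
  assumes "desc_closed A D" "fg_dc (induced D A) B"
  shows "fg_dc D B"
proof -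
  obtain X where X: "finite X" "X \<subseteq> A" "B = desc_set (induced D A) X" using assms(2) fg_dc_iff[of "induced D A" B]
    by auto
  then show ?thesis unfolding fg_dc_iff using desc_set_induced_desc_closed[OF assms(1) X(2)] desc_closed_subset_verts[OF assms(1)]
    by (intro exI[of _ X]) auto
qed

lemma induced_induced: "B \<subseteq> A \<Longrightarrow> induced (induced D A) B = induced D B"
  by (auto simp: induced_def edges_def)

section \<open>Isomorphisms and \<open>\<le>\<close>-embeddings\<close>

lemma dg_iso_id: "dg_iso (\<lambda>x. x) D D"
  by (simp add: dg_iso_def bij_betw_def)

lemma isomorphic_refl: "isomorphic D D"
  using dg_iso_id isomorphic_def by blast

lemma dg_iso_comp: "dg_iso f D1 D2 \<Longrightarrow> dg_iso g D2 D3 \<Longrightarrow> dg_iso (g \<circ> f) D1 D3"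
  unfolding dg_iso_def by (metis bij_betw_apply bij_betw_trans comp_apply)

lemma dg_iso_inv:
  assumes "dg_iso f D1 D2"
  shows "dg_iso (inv_into (verts D1) f) D2 D1"
proof -
  have b: "bij_betw f (verts D1) (verts D2)" using assms dg_iso_def by blast
  have b': "bij_betw (inv_into (verts D1) f) (verts D2) (verts D1)" using b bij_betw_inv_into by blast
  show ?thesis unfolding dg_iso_def
  proof (intro conjI b' ballI)
    fix x y assume xy: "x \<in> verts D2" "y \<in> verts D2"
    let ?g = "inv_into (verts D1) f"
    have "?g x \<in> verts D1" "?g y \<in> verts D1" using b' xy bij_betwE by blast+
    moreover have "f (?g x) = x" "f (?g y) = y" using b xy by (meson bij_betw_inv_into_right)+
    ultimately show "(x, y) \<in> edges D2 \<longleftrightarrow> (?g x, ?g y) \<in> edges D1"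
      using assms unfolding dg_iso_def by metis
  qed
qed

lemma dg_iso_inv_f: "dg_iso f D1 D2 \<Longrightarrow> x \<in> verts D1 \<Longrightarrow> inv_into (verts D1) f (f x) = x"
  unfolding dg_iso_def by (meson bij_betw_inv_into_left)

lemma dg_iso_f_inv: "dg_iso f D1 D2 \<Longrightarrow> y \<in> verts D2 \<Longrightarrow> f (inv_into (verts D1) f y) = y"
  unfolding dg_iso_def by (meson bij_betw_inv_into_right)

lemma dg_iso_mem: "dg_iso f D1 D2 \<Longrightarrow> x \<in> verts D1 \<Longrightarrow> f x \<in> verts D2"
  unfolding dg_iso_def by (meson bij_betwE)

lemma dg_iso_image: "dg_iso f D1 D2 \<Longrightarrow> f ` verts D1 = verts D2"
  unfolding dg_iso_def by (simp add: bij_betw_def)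

lemma dg_iso_inj: "dg_iso f D1 D2 \<Longrightarrow> inj_on f (verts D1)"
  unfolding dg_iso_def by (simp add: bij_betw_def)

lemma dg_iso_edge: "dg_iso f D1 D2 \<Longrightarrow> x \<in> verts D1 \<Longrightarrow> y \<in> verts D1 \<Longrightarrow>
   (f x, f y) \<in> edges D2 \<longleftrightarrow> (x, y) \<in> edges D1"
  unfolding dg_iso_def by blast

lemma isomorphic_sym: "isomorphic D1 D2 \<Longrightarrow> isomorphic D2 D1"
  unfolding isomorphic_def using dg_iso_inv[of _ D1 D2] by blast

lemma isomorphic_trans: "isomorphic D1 D2 \<Longrightarrow> isomorphic D2 D3 \<Longrightarrow> isomorphic D1 D3"
  unfolding isomorphic_def using dg_iso_comp[of _ D1 D2 _ D3] by blast

lemma dg_iso_arc_rel: "dg_iso f D1 D2 \<Longrightarrow> x \<in> verts D1 \<Longrightarrow> y \<in> verts D1 \<Longrightarrow>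
   (f x, f y) \<in> arc_rel D2 \<longleftrightarrow> (x, y) \<in> arc_rel D1"
  by (auto simp: arc_rel_def dg_iso_edge dg_iso_mem)

lemma dg_iso_rtrancl:
  assumes "dg_iso f D1 D2" "(x, y) \<in> (arc_rel D1)\<^sup>*" "x \<in> verts D1"
  shows "(f x, f y) \<in> (arc_rel D2)\<^sup>*"
  using assms(2)
proof (induction rule: rtrancl_induct)
  case base then show ?case by simp
next
  case (step y z)
  have "y \<in> verts D1" "z \<in> verts D1" using step(2) by (auto simp: arc_rel_def)
  then have "(f y, f z) \<in> arc_rel D2" using dg_iso_arc_rel[OF assms(1)] step(2) by blast
  then show ?case using step by (meson rtrancl.rtrancl_into_rtrancl)
qed

lemma dg_iso_desc_subset:
  assumes "dg_iso f D1 D2" "x \<in> verts D1"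
  shows "f ` desc D1 x \<subseteq> desc D2 (f x)"
proof
  fix z assume "z \<in> f ` desc D1 x"
  then obtain y where y: "y \<in> desc D1 x" "z = f y" by blast
  then have "(x, y) \<in> (arc_rel D1)\<^sup>*" using assms(2) by (simp add: desc_eq_rtrancl)
  then have "(f x, f y) \<in> (arc_rel D2)\<^sup>*" using dg_iso_rtrancl[OF assms(1) _ assms(2)] by blast
  moreover have "f x \<in> verts D2" using dg_iso_mem[OF assms] .
  ultimately show "z \<in> desc D2 (f x)" using y(2) by (simp add: desc_eq_rtrancl)
qed

lemma dg_iso_desc:
  assumes "dg_iso f D1 D2" "x \<in> verts D1"
  shows "desc D2 (f x) = f ` desc D1 x"
proof
  show "f ` desc D1 x \<subseteq> desc D2 (f x)" using dg_iso_desc_subset[OF assms] .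
  show "desc D2 (f x) \<subseteq> f ` desc D1 x"
  proof
    fix z assume z: "z \<in> desc D2 (f x)"
    let ?g = "inv_into (verts D1) f"
    have fx: "f x \<in> verts D2" using dg_iso_mem[OF assms] .
    have gfx: "?g (f x) = x" using dg_iso_inv_f[OF assms] .
    have "?g ` desc D2 (f x) \<subseteq> desc D1 (?g (f x))"
      using dg_iso_desc_subset[OF dg_iso_inv[OF assms(1)] fx] .
    then have "?g z \<in> desc D1 (?g (f x))" using z by (rule subsetD[OF _ imageI])
    then have "?g z \<in> desc D1 x" by (simp only: gfx)
    then have 1: "f (?g z) \<in> f ` desc D1 x" by (rule imageI)
    have "z \<in> verts D2" using z desc_subset_verts[of D2 "f x"] by blast
    then have "f (?g z) = z" using dg_iso_f_inv[OF assms(1)] by simp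
    then show "z \<in> f ` desc D1 x" using 1 by simp
  qed
qed

lemma dg_iso_desc_set:
  assumes "dg_iso f D1 D2" "X \<subseteq> verts D1"
  shows "desc_set D2 (f ` X) = f ` desc_set D1 X"
proof -
  have "desc_set D2 (f ` X) = (\<Union>x\<in>X. desc D2 (f x))" by (rule desc_set_image)
  also have "\<dots> = (\<Union>x\<in>X. f ` desc D1 x)"
    using dg_iso_desc[OF assms(1)] assms(2) by (intro SUP_cong) auto
  also have "\<dots> = f ` desc_set D1 X" unfolding desc_set_def by (simp add: image_UN)
  finally show ?thesis .
qed

lemma dg_iso_fg_dc:
  assumes "dg_iso f D1 D2" "fg_dc D1 A"
  shows "fg_dc D2 (f ` A)"
proof -
  obtain X where X: "finite X" "X \<subseteq> verts D1" "A = desc_set D1 X"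
    using assms(2) fg_dc_iff[of D1 A] by blast
  have "f ` X \<subseteq> verts D2" using X(2) dg_iso_image[OF assms(1)] by blast
  moreover have "f ` A = desc_set D2 (f ` X)" using dg_iso_desc_set[OF assms(1) X(2)] X(3) by simp
  ultimately show ?thesis unfolding fg_dc_iff using X(1) by blast
qed

lemma dg_iso_induced:
  assumes "dg_iso f D1 D2" "A \<subseteq> verts D1"
  shows "dg_iso f (induced D1 A) (induced D2 (f ` A))"
proof -
  have "inj_on f A" using dg_iso_inj[OF assms(1)] assms(2) inj_on_subset by blast
  then have "bij_betw f A (f ` A)" by (simp add: bij_betw_def)
  moreover have "\<forall>x\<in>A. \<forall>y\<in>A. (x, y) \<in> edges D1 \<longleftrightarrow> (f x, f y) \<in> edges D2"
    using dg_iso_edge[OF assms(1)] assms(2) by blast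
  ultimately show ?thesis unfolding dg_iso_def by auto
qed

lemma dg_iso_fin_gen:
  assumes "dg_iso f D1 D2" "fin_gen D1"
  shows "fin_gen D2"
proof -
  obtain X where X: "finite X" "X \<subseteq> verts D1" "verts D1 = desc_set D1 X"
    using assms(2) unfolding fin_gen_def by blast
  have "f ` X \<subseteq> verts D2" using X(2) dg_iso_image[OF assms(1)] by blast
  moreover have "verts D2 = desc_set D2 (f ` X)"
    using dg_iso_desc_set[OF assms(1) X(2)] X(3) dg_iso_image[OF assms(1)] by simp
  ultimately show ?thesis unfolding fin_gen_def using X(1) by blast
qed

lemma dg_iso_countable: "dg_iso f D1 D2 \<Longrightarrow> countable (verts D1) \<Longrightarrow> countable (verts D2)"
proof -
  assume a: "dg_iso f D1 D2" "countable (verts D1)"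
  have "countable (f ` verts D1)" using a(2) by (rule countable_image)
  then show ?thesis using dg_iso_image[OF a(1)] by simp
qed

lemma le_emb_inj: "le_emb g D M \<Longrightarrow> inj_on g (verts D)"
  unfolding le_emb_def embedding_def by blast

lemma le_emb_desc_closed: "le_emb g D M \<Longrightarrow> desc_closed (g ` verts D) M"
  unfolding le_emb_def by blast

lemma le_emb_image_subset: "le_emb g D M \<Longrightarrow> g ` verts D \<subseteq> verts M"
  unfolding le_emb_def embedding_def by blast

lemma le_emb_mem: "le_emb g D M \<Longrightarrow> x \<in> verts D \<Longrightarrow> g x \<in> verts M"
  unfolding le_emb_def embedding_def by blast

lemma le_emb_edge: "le_emb g D M \<Longrightarrow> x \<in> verts D \<Longrightarrow> y \<in> verts D \<Longrightarrow>
   (g x, g y) \<in> edges M \<longleftrightarrow> (x, y) \<in> edges D"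
  unfolding le_emb_def embedding_def by blast

lemma le_emb_dg_iso: "le_emb g D M \<Longrightarrow> dg_iso g D (induced M (g ` verts D))"
  unfolding le_emb_def embedding_def dg_iso_def bij_betw_def by auto

lemma le_emb_intro:
  assumes "inj_on g (verts D)" "g ` verts D \<subseteq> verts M"
    "\<And>x y. x \<in> verts D \<Longrightarrow> y \<in> verts D \<Longrightarrow> (g x, g y) \<in> edges M \<longleftrightarrow> (x, y) \<in> edges D"
    "\<And>x. x \<in> verts D \<Longrightarrow> desc M (g x) \<subseteq> g ` verts D"
  shows "le_emb g D M"
  unfolding le_emb_def embedding_def desc_closed_def using assms by blast

lemma le_emb_desc:
  assumes "le_emb g D M" "x \<in> verts D"
  shows "desc M (g x) = g ` desc D x"
proof -
  have "desc M (g x) = desc (induced M (g ` verts D)) (g x)"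
    using desc_induced_desc_closed[OF le_emb_desc_closed[OF assms(1)]] assms(2) by simp
  also have "\<dots> = g ` desc D x" using dg_iso_desc[OF le_emb_dg_iso[OF assms(1)] assms(2)] .
  finally show ?thesis .
qed

lemma le_emb_desc_set:
  assumes "le_emb g D M" "X \<subseteq> verts D"
  shows "desc_set M (g ` X) = g ` desc_set D X"
proof -
  have "desc_set M (g ` X) = (\<Union>x\<in>X. desc M (g x))" by (rule desc_set_image)
  also have "\<dots> = (\<Union>x\<in>X. g ` desc D x)"
    using le_emb_desc[OF assms(1)] assms(2) by (intro SUP_cong) auto
  also have "\<dots> = g ` desc_set D X" unfolding desc_set_def by (simp add: image_UN)
  finally show ?thesis .
qed

lemma le_emb_fg_dc:
  assumes "le_emb g D M" "fg_dc D A"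
  shows "fg_dc M (g ` A)"
proof -
  obtain X where X: "finite X" "X \<subseteq> verts D" "A = desc_set D X"
    using assms(2) fg_dc_iff[of D A] by blast
  have "g ` X \<subseteq> verts M" using X(2) le_emb_image_subset[OF assms(1)] by blast
  moreover have "g ` A = desc_set M (g ` X)" using le_emb_desc_set[OF assms(1) X(2)] X(3) by simp
  ultimately show ?thesis unfolding fg_dc_iff using X(1) by blast
qed

lemma dg_iso_le_emb:
  assumes "dg_iso f D1 D2"
  shows "le_emb f D1 D2"
proof (rule le_emb_intro)
  show "inj_on f (verts D1)" using dg_iso_inj[OF assms] .
  show "f ` verts D1 \<subseteq> verts D2" using dg_iso_image[OF assms] by simp
  show "(f x, f y) \<in> edges D2 \<longleftrightarrow> (x, y) \<in> edges D1" if "x \<in> verts D1" "y \<in> verts D1" for x y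
    using dg_iso_edge[OF assms that] .
  show "desc D2 (f x) \<subseteq> f ` verts D1" if "x \<in> verts D1" for x
    using desc_subset_verts[of D2 "f x"] dg_iso_image[OF assms] by simp
qed

lemma le_emb_comp:
  assumes f: "le_emb f A B" and g: "le_emb g B C"
  shows "le_emb (g \<circ> f) A C"
proof (rule le_emb_intro)
  have fi: "f ` verts A \<subseteq> verts B" using le_emb_image_subset[OF f] .
  show "inj_on (g \<circ> f) (verts A)"
    using le_emb_inj[OF f] inj_on_subset[OF le_emb_inj[OF g] fi] by (simp add: comp_inj_on)
  show "(g \<circ> f) ` verts A \<subseteq> verts C" using fi le_emb_image_subset[OF g] by (auto simp: image_comp[symmetric])
  show "((g \<circ> f) x, (g \<circ> f) y) \<in> edges C \<longleftrightarrow> (x, y) \<in> edges A" if "x \<in> verts A" "y \<in> verts A" for x y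
    using le_emb_edge[OF g] le_emb_edge[OF f that] le_emb_mem[OF f] that by simp
  show "desc C ((g \<circ> f) x) \<subseteq> (g \<circ> f) ` verts A" if "x \<in> verts A" for x
  proof -
    have fx: "f x \<in> verts B" using le_emb_mem[OF f that] .
    have "desc C ((g \<circ> f) x) = g ` desc B (f x)" using le_emb_desc[OF g fx] by simp
    also have "\<dots> \<subseteq> g ` (f ` verts A)" using desc_closed_desc[OF le_emb_desc_closed[OF f]] that by blast
    finally show ?thesis by (simp add: image_comp)
  qed
qed

lemma le_emb_cong:
  assumes "le_emb f D M" "\<And>x. x \<in> verts D \<Longrightarrow> g x = f x"
  shows "le_emb g D M"
proof (rule le_emb_intro)
  have im: "g ` verts D = f ` verts D" using assms(2) by (rule image_cong[OF refl])
  show "inj_on g (verts D)" using le_emb_inj[OF assms(1)] assms(2) inj_on_cong by blast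
  show "g ` verts D \<subseteq> verts M" using im le_emb_image_subset[OF assms(1)] by simp
  show "(g x, g y) \<in> edges M \<longleftrightarrow> (x, y) \<in> edges D" if "x \<in> verts D" "y \<in> verts D" for x y
    using le_emb_edge[OF assms(1) that] assms(2) that by simp
  show "desc M (g x) \<subseteq> g ` verts D" if "x \<in> verts D" for x
    using desc_closed_desc[OF le_emb_desc_closed[OF assms(1)]] im assms(2)[OF that] that by simp
qed

lemma le_emb_into_induced:
  assumes "le_emb g D M" "g ` verts D \<subseteq> U" "U \<subseteq> verts M"
  shows "le_emb g D (induced M U)"
proof (rule le_emb_intro)
  show "inj_on g (verts D)" using le_emb_inj[OF assms(1)] .
  show "g ` verts D \<subseteq> verts (induced M U)" using assms(2) by simp
  show "(g x, g y) \<in> edges (induced M U) \<longleftrightarrow> (x, y) \<in> edges D" if "x \<in> verts D" "y \<in> verts D" for x y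
    using le_emb_edge[OF assms(1) that] assms(2) that by auto
  show "desc (induced M U) (g x) \<subseteq> g ` verts D" if "x \<in> verts D" for x
    using desc_induced_subset[OF assms(3), of "g x"] desc_closed_desc[OF le_emb_desc_closed[OF assms(1)]] that by blast
qed

lemma le_emb_from_induced:
  assumes "le_emb g D (induced M U)" "desc_closed U M"
  shows "le_emb g D M"
proof (rule le_emb_intro)
  have U: "U \<subseteq> verts M" using desc_closed_subset_verts[OF assms(2)] .
  have gi: "g ` verts D \<subseteq> U" using le_emb_image_subset[OF assms(1)] by simp
  show "inj_on g (verts D)" using le_emb_inj[OF assms(1)] .
  show "g ` verts D \<subseteq> verts M" using gi U by blast
  show "(g x, g y) \<in> edges M \<longleftrightarrow> (x, y) \<in> edges D" if "x \<in> verts D" "y \<in> verts D" for x y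
    using le_emb_edge[OF assms(1) that] gi that by auto
  show "desc M (g x) \<subseteq> g ` verts D" if "x \<in> verts D" for x
  proof -
    have "g x \<in> U" using gi that by blast
    then have "desc M (g x) = desc (induced M U) (g x)" using desc_induced_desc_closed[OF assms(2)] by simp
    then show ?thesis using desc_closed_desc[OF le_emb_desc_closed[OF assms(1)]] that by simp
  qed
qed

lemma le_emb_inclusion:
  assumes "desc_closed A D"
  shows "le_emb (\<lambda>x. x) (induced D A) D"
proof (rule le_emb_intro)
  show "inj_on (\<lambda>x. x) (verts (induced D A))" by simp
  show "(\<lambda>x. x) ` verts (induced D A) \<subseteq> verts D" using desc_closed_subset_verts[OF assms] by simp
  show "(x, y) \<in> edges D \<longleftrightarrow> (x, y) \<in> edges (induced D A)" if "x \<in> verts (induced D A)" "y \<in> verts (induced D A)" for x y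
    using that by simp
  show "desc D x \<subseteq> (\<lambda>x. x) ` verts (induced D A)" if "x \<in> verts (induced D A)" for x
    using desc_closed_desc[OF assms] that by simp
qed

definition map_digraph :: "('a \<Rightarrow> 'b) \<Rightarrow> 'a digraph \<Rightarrow> 'b digraph" where
  "map_digraph f D = (f ` verts D, (\<lambda>(x, y). (f x, f y)) ` edges D)"

lemma wf_digraph_edge_verts: "wf_digraph D \<Longrightarrow> (x, y) \<in> edges D \<Longrightarrow> x \<in> verts D \<and> y \<in> verts D"
  unfolding wf_digraph_def by blast

lemma dg_iso_map_digraph:
  assumes "wf_digraph D" "inj_on f (verts D)"
  shows "dg_iso f D (map_digraph f D)" "wf_digraph (map_digraph f D)"
proof -
  have v: "verts (map_digraph f D) = f ` verts D" by (simp add: map_digraph_def verts_def)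
  have e: "edges (map_digraph f D) = (\<lambda>(x, y). (f x, f y)) ` edges D" by (simp add: map_digraph_def edges_def)
  have ed: "(f x, f y) \<in> edges (map_digraph f D) \<longleftrightarrow> (x, y) \<in> edges D"
    if "x \<in> verts D" "y \<in> verts D" for x y
  proof
    assume "(f x, f y) \<in> edges (map_digraph f D)"
    then obtain u v where uv: "(u, v) \<in> edges D" "f u = f x" "f v = f y" using e by auto
    then have "u \<in> verts D" "v \<in> verts D" using wf_digraph_edge_verts[OF assms(1)] by blast+
    then have "u = x" "v = y" using uv that assms(2) by (auto dest: inj_onD)
    then show "(x, y) \<in> edges D" using uv by simp
  next
    assume "(x, y) \<in> edges D" then show "(f x, f y) \<in> edges (map_digraph f D)" using e by force
  qed
  show iso: "dg_iso f D (map_digraph f D)" unfolding dg_iso_def bij_betw_def using assms(2) v ed by blast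
  show "wf_digraph (map_digraph f D)" unfolding wf_digraph_def
  proof
    show "edges (map_digraph f D) \<subseteq> verts (map_digraph f D) \<times> verts (map_digraph f D)"
      using wf_digraph_edge_verts[OF assms(1)] e v by auto
    show "\<forall>x. (x, x) \<notin> edges (map_digraph f D)"
    proof (intro allI notI)
      fix z assume "(z, z) \<in> edges (map_digraph f D)"
      then obtain u v where uv: "(u, v) \<in> edges D" "f u = z" "f v = z" using e by auto
      then have "u \<in> verts D" "v \<in> verts D" using wf_digraph_edge_verts[OF assms(1)] by blast+
      then have "u = v" using uv assms(2) by (auto dest: inj_onD)
      then show False using uv assms(1) unfolding wf_digraph_def by blast
    qed
  qed
qed

lemma wf_digraph_induced: "wf_digraph D \<Longrightarrow> wf_digraph (induced D A)"
  unfolding wf_digraph_def by auto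

lemma countable_dg_iso_nat:
  assumes "wf_digraph D" "countable (verts D)"
  shows "\<exists>(f :: 'a \<Rightarrow> nat) (D' :: nat digraph). dg_iso f D D' \<and> wf_digraph D'"
proof -
  obtain f :: "'a \<Rightarrow> nat" where "inj_on f (verts D)" using assms(2) by (meson countableE)
  then show ?thesis using dg_iso_map_digraph[OF assms(1)] by blast
qed

section \<open>Back and forth\<close>

definition piso :: "'a digraph \<Rightarrow> 'b digraph \<Rightarrow> 'a set \<Rightarrow> 'b set \<Rightarrow> ('a \<Rightarrow> 'b) \<Rightarrow> bool" where
  "piso M1 M2 A B f \<longleftrightarrow> fg_dc M1 A \<and> fg_dc M2 B \<and> dg_iso f (induced M1 A) (induced M2 B)"

definition forth :: "'a digraph \<Rightarrow> 'b digraph \<Rightarrow> bool" where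
  "forth M1 M2 \<longleftrightarrow> (\<forall>A B f x. piso M1 M2 A B f \<and> x \<in> verts M1 \<longrightarrow>
     (\<exists>A' B' f'. piso M1 M2 A' B' f' \<and> A \<subseteq> A' \<and> x \<in> A' \<and> (\<forall>a\<in>A. f' a = f a)))"

lemma piso_dg_iso: "piso M1 M2 A B f \<Longrightarrow> dg_iso f (induced M1 A) (induced M2 B)"
  unfolding piso_def by blast

lemma piso_image: "piso M1 M2 A B f \<Longrightarrow> f ` A = B"
  using dg_iso_image[OF piso_dg_iso] by (metis verts_induced)

lemma piso_inv: "piso M1 M2 A B f \<Longrightarrow> piso M2 M1 B A (inv_into A f)"
  unfolding piso_def using dg_iso_inv[of f "induced M1 A" "induced M2 B"] by simp

lemma piso_inv_into_f: "piso M1 M2 A B f \<Longrightarrow> a \<in> A \<Longrightarrow> inv_into A f (f a) = a"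
  using dg_iso_inv_f[OF piso_dg_iso] by (metis verts_induced)

lemma piso_subset1: "piso M1 M2 A B f \<Longrightarrow> A \<subseteq> verts M1"
  unfolding piso_def using fg_dc_subset_verts by blast

lemma piso_subset2: "piso M1 M2 A B f \<Longrightarrow> B \<subseteq> verts M2"
  unfolding piso_def using fg_dc_subset_verts by blast

lemma forth_back:
  assumes fw: "forth M2 M1" and g: "piso M1 M2 A B f" and y: "y \<in> verts M2"
  shows "\<exists>A' B' f'. piso M1 M2 A' B' f' \<and> A \<subseteq> A' \<and> y \<in> B' \<and> (\<forall>a\<in>A. f' a = f a)"
proof -
  have gi: "piso M2 M1 B A (inv_into A f)" using piso_inv[OF g] .
  obtain B' A' h where h: "piso M2 M1 B' A' h" "B \<subseteq> B'" "y \<in> B'" "\<forall>b\<in>B. h b = inv_into A f b"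
    using fw gi y unfolding forth_def by blast
  have g': "piso M1 M2 A' B' (inv_into B' h)" using piso_inv[OF h(1)] .
  have himg: "h ` B' = A'" using piso_image[OF h(1)] .
  have fA: "f a \<in> B" if "a \<in> A" for a using piso_image[OF g] that by blast
  have hfa: "h (f a) = a" if "a \<in> A" for a using h(4) fA[OF that] piso_inv_into_f[OF g that] by simp
  have "A \<subseteq> A'"
  proof
    fix a assume a: "a \<in> A"
    have "h (f a) \<in> A'" using himg fA[OF a] h(2) by blast
    then show "a \<in> A'" using hfa[OF a] by simp
  qed
  moreover have "\<forall>a\<in>A. inv_into B' h a = f a"
  proof
    fix a assume a: "a \<in> A"
    have "inv_into B' h (h (f a)) = f a" using piso_inv_into_f[OF h(1)] fA[OF a] h(2) by blast
    then show "inv_into B' h a = f a" using hfa[OF a] by simp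
  qed
  ultimately show ?thesis using g' h(3) by blast
qed

lemma back_and_forth_step:
  assumes fw1: "forth M1 M2" and fw2: "forth M2 M1" and g: "piso M1 M2 A B f"
  shows "\<exists>A' B' f'. piso M1 M2 A' B' f' \<and> A \<subseteq> A' \<and> B \<subseteq> B' \<and> (\<forall>a\<in>A. f' a = f a)
      \<and> (x \<in> verts M1 \<longrightarrow> x \<in> A') \<and> (y \<in> verts M2 \<longrightarrow> y \<in> B')"
proof -
  obtain A1 B1 f1 where s1: "piso M1 M2 A1 B1 f1" "A \<subseteq> A1" "x \<in> verts M1 \<longrightarrow> x \<in> A1" "\<forall>a\<in>A. f1 a = f a"
  proof (cases "x \<in> verts M1")
    case True
    then show ?thesis using that fw1 g unfolding forth_def by blast
  next
    case False
    then show ?thesis using that g by blast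
  qed
  obtain A2 B2 f2 where s2: "piso M1 M2 A2 B2 f2" "A1 \<subseteq> A2" "y \<in> verts M2 \<longrightarrow> y \<in> B2" "\<forall>a\<in>A1. f2 a = f1 a"
  proof (cases "y \<in> verts M2")
    case True
    then show ?thesis using that forth_back[OF fw2 s1(1)] by blast
  next
    case False
    then show ?thesis using that s1(1) by blast
  qed
  have "B \<subseteq> B2"
  proof
    fix b assume "b \<in> B"
    then obtain a where a: "a \<in> A" "b = f a" using piso_image[OF g] by blast
    then have "f2 a = b" using s2(4) s1(4) s1(2) by auto
    moreover have "a \<in> A2" using a s1(2) s2(2) by blast
    ultimately show "b \<in> B2" using piso_image[OF s2(1)] by blast
  qed
  then show ?thesis using s1 s2 by (intro exI[of _ A2] exI[of _ B2] exI[of _ f2]) auto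
qed

lemma piso_chain:
  assumes c1: "countable (verts M1)" and c2: "countable (verts M2)"
    and fw1: "forth M1 M2" and fw2: "forth M2 M1" and g0: "piso M1 M2 A0 B0 f0"
  obtains A B F where "\<And>n. piso M1 M2 (A n) (B n) (F n)" "A 0 = A0" "F 0 = f0"
    "\<And>n. A n \<subseteq> A (Suc n)" "\<And>n a. a \<in> A n \<Longrightarrow> F (Suc n) a = F n a"
    "\<And>x. x \<in> verts M1 \<Longrightarrow> \<exists>n. x \<in> A n" "\<And>y. y \<in> verts M2 \<Longrightarrow> \<exists>n. y \<in> B n"
proof -
  define e1 where "e1 = from_nat_into (verts M1)"
  define e2 where "e2 = from_nat_into (verts M2)"
  define P where "P n s \<longleftrightarrow> piso M1 M2 (fst s) (fst (snd s)) (snd (snd s)) \<and> (n = 0 \<longrightarrow> s = (A0, B0, f0))"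
    for n :: nat and s :: "'a set \<times> 'b set \<times> ('a \<Rightarrow> 'b)"
  define Q where "Q n s s' \<longleftrightarrow> fst s \<subseteq> fst s' \<and> (\<forall>a\<in>fst s. snd (snd s') a = snd (snd s) a)
     \<and> (e1 n \<in> verts M1 \<longrightarrow> e1 n \<in> fst s') \<and> (e2 n \<in> verts M2 \<longrightarrow> e2 n \<in> fst (snd s'))"
    for n and s s' :: "'a set \<times> 'b set \<times> ('a \<Rightarrow> 'b)"
  have "\<exists>s. \<forall>n. P n (s n) \<and> Q n (s n) (s (Suc n))"
  proof (rule dependent_nat_choice)
    show "\<exists>s. P 0 s" using g0 by (auto simp: P_def)
    show "\<exists>s'. P (Suc n) s' \<and> Q n s s'" if Pns: "P n s" for s and n :: nat
    proof -
      obtain A' B' f' where "piso M1 M2 A' B' f'" "fst s \<subseteq> A'" "\<forall>a\<in>fst s. f' a = snd (snd s) a"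
        "e1 n \<in> verts M1 \<longrightarrow> e1 n \<in> A'" "e2 n \<in> verts M2 \<longrightarrow> e2 n \<in> B'"
        using back_and_forth_step[OF fw1 fw2, of "fst s" "fst (snd s)" "snd (snd s)" "e1 n" "e2 n"] Pns
        unfolding P_def by blast
      then show ?thesis unfolding P_def Q_def by (intro exI[of _ "(A', B', f')"]) simp
    qed
  qed
  then obtain s where s: "\<And>n. P n (s n)" "\<And>n. Q n (s n) (s (Suc n))" by blast
  define A where "A n = fst (s n)" for n
  define B where "B n = fst (snd (s n))" for n
  define F where "F n = snd (snd (s n))" for n
  have cover1: "\<exists>n. x \<in> A n" if x: "x \<in> verts M1" for x
  proof -
    obtain n where "e1 n = x" using x c1 unfolding e1_def by (metis empty_iff from_nat_into_surj)
    then show ?thesis using s(2)[of n] x unfolding Q_def A_def by blast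
  qed
  have cover2: "\<exists>n. y \<in> B n" if y: "y \<in> verts M2" for y
  proof -
    obtain n where "e2 n = y" using y c2 unfolding e2_def by (metis empty_iff from_nat_into_surj)
    then show ?thesis using s(2)[of n] y unfolding Q_def B_def by blast
  qed
  have "piso M1 M2 (A n) (B n) (F n)" for n using s(1)[of n] by (simp add: P_def A_def B_def F_def)
  moreover have "A 0 = A0" "F 0 = f0" using s(1)[of 0] by (simp_all add: P_def A_def F_def)
  moreover have "A n \<subseteq> A (Suc n)" "a \<in> A n \<Longrightarrow> F (Suc n) a = F n a" for n a
    using s(2)[of n] by (auto simp: Q_def A_def F_def)
  ultimately show ?thesis using cover1 cover2 by (rule that)
qed

lemma chain_union_fun:
  assumes AS: "\<And>n. A n \<subseteq> A (Suc n)" and FS: "\<And>n a. a \<in> A n \<Longrightarrow> F (Suc n) a = F n a"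
  obtains g where "\<And>n x. x \<in> A n \<Longrightarrow> g x = F n x"
proof
  have Fmono: "n \<le> m \<Longrightarrow> a \<in> A n \<Longrightarrow> F m a = F n a" for n m a
  proof (induction m rule: dec_induct)
    case (step m)
    then show ?case using FS[of a m] lift_Suc_mono_le[of A n m] AS by auto
  qed simp
  fix n x assume x: "x \<in> A n"
  let ?k = "LEAST n. x \<in> A n"
  have "x \<in> A ?k" "?k \<le> n" using x by (auto intro: LeastI Least_le)
  then show "F ?k x = F n x" using Fmono by simp
qed

text \<open>Any two vertices lie in a common stage of the chain, where the union map is an isomorphism.\<close>

lemma dg_iso_piso_chain_union:
  assumes piso_n: "\<And>n. piso M1 M2 (A n) (B n) (F n)"
    and AS: "\<And>n. A n \<subseteq> A (Suc n)" and FS: "\<And>n a. a \<in> A n \<Longrightarrow> F (Suc n) a = F n a"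
    and cover1: "\<And>x. x \<in> verts M1 \<Longrightarrow> \<exists>n. x \<in> A n"
    and cover2: "\<And>y. y \<in> verts M2 \<Longrightarrow> \<exists>n. y \<in> B n"
  shows "\<exists>g. dg_iso g M1 M2 \<and> (\<forall>a\<in>A 0. g a = F 0 a)"
proof -
  have Amono: "n \<le> m \<Longrightarrow> A n \<subseteq> A m" for n m
    using lift_Suc_mono_le[of A] AS by blast
  obtain g where gF: "\<And>n x. x \<in> A n \<Longrightarrow> g x = F n x"
    using chain_union_fun[of A F] AS FS by blast
  have both: "\<exists>n. x \<in> A n \<and> y \<in> A n" if xy: "x \<in> verts M1" "y \<in> verts M1" for x y
  proof -
    obtain n m where "x \<in> A n" "y \<in> A m" using cover1 xy by blast
    then show ?thesis using Amono[of n "max n m"] Amono[of m "max n m"] by auto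
  qed
  have isoN: "dg_iso (F n) (induced M1 (A n)) (induced M2 (B n))" for n
    using piso_dg_iso[OF piso_n] .
  have imgN: "F n ` A n = B n" for n using piso_image[OF piso_n] .
  have "dg_iso g M1 M2"
    unfolding dg_iso_def bij_betw_def
  proof (intro conjI ballI)
    show "inj_on g (verts M1)"
    proof (rule inj_onI)
      fix x y assume xy: "x \<in> verts M1" "y \<in> verts M1" "g x = g y"
      then obtain n where n: "x \<in> A n" "y \<in> A n" using both by blast
      then show "x = y" using xy gF dg_iso_inj[OF isoN[of n]] by (simp add: inj_on_def)
    qed
    show "g ` verts M1 = verts M2"
    proof
      show "g ` verts M1 \<subseteq> verts M2"
      proof
        fix z assume "z \<in> g ` verts M1"
        then obtain n x where x: "x \<in> A n" "z = g x" using cover1 by blast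
        then have "z \<in> B n" using gF imgN by blast
        then show "z \<in> verts M2" using piso_subset2[OF piso_n] by blast
      qed
      show "verts M2 \<subseteq> g ` verts M1"
      proof
        fix y assume "y \<in> verts M2"
        then obtain n x where x: "x \<in> A n" "y = F n x" using cover2 imgN by blast
        then have "y = g x" using gF by simp
        then show "y \<in> g ` verts M1" using x piso_subset1[OF piso_n] by blast
      qed
    qed
    fix x y assume "x \<in> verts M1" "y \<in> verts M1"
    then obtain n where n: "x \<in> A n" "y \<in> A n" using both by blast
    then have "F n x \<in> B n" "F n y \<in> B n" using imgN by blast+
    then show "(x, y) \<in> edges M1 \<longleftrightarrow> (g x, g y) \<in> edges M2"
      using dg_iso_edge[OF isoN[of n], of x y] n gF by simp
  qed
  then show ?thesis using gF by blast
qed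

lemma back_and_forth:
  assumes "countable (verts M1)" "countable (verts M2)" "forth M1 M2" "forth M2 M1"
    and "piso M1 M2 A0 B0 f0"
  shows "\<exists>g. dg_iso g M1 M2 \<and> (\<forall>a\<in>A0. g a = f0 a)"
proof -
  obtain A B F where "\<And>n. piso M1 M2 (A n) (B n) (F n)" "A 0 = A0" "F 0 = f0"
    "\<And>n. A n \<subseteq> A (Suc n)" "\<And>n a. a \<in> A n \<Longrightarrow> F (Suc n) a = F n a"
    "\<And>x. x \<in> verts M1 \<Longrightarrow> \<exists>n. x \<in> A n" "\<And>y. y \<in> verts M2 \<Longrightarrow> \<exists>n. y \<in> B n"
    using piso_chain[OF assms] by blast
  from dg_iso_piso_chain_union[of M1 M2 A B F, OF this(1,4,5,6,7)] show ?thesis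
    using \<open>A 0 = A0\<close> \<open>F 0 = f0\<close> by simp
qed

section \<open>Ages of descendant-homogeneous digraphs\<close>

lemma desc_homogeneous_wf: "desc_homogeneous M \<Longrightarrow> wf_digraph M" unfolding desc_homogeneous_def by blast
lemma desc_homogeneous_countable: "desc_homogeneous M \<Longrightarrow> countable (verts M)" unfolding desc_homogeneous_def by blast
lemma desc_homogeneous_extend:
  assumes "desc_homogeneous M" "fg_dc M A" "fg_dc M B" "dg_iso f (induced M A) (induced M B)"
  shows "\<exists>g. dg_iso g M M \<and> (\<forall>x\<in>A. g x = f x)"
  using assms unfolding desc_homogeneous_def by blast

lemma dg_iso_induced_le_emb:
  assumes "dg_iso h D (induced M A)" "desc_closed A M"
  shows "le_emb h D M"
  using le_emb_from_induced[OF dg_iso_le_emb[OF assms(1)] assms(2)] .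

lemma fin_gen_fg_dc_verts: "fin_gen D \<Longrightarrow> fg_dc D (verts D)"
  unfolding fin_gen_def fg_dc_iff by blast

lemma fin_gen_induced: assumes "fg_dc M A" shows "fin_gen (induced M A)"
proof -
  obtain X where X: "finite X" "X \<subseteq> verts M" "A = desc_set M X" using assms fg_dc_iff[of M A] by blast
  have XA: "X \<subseteq> A" using desc_set_superset[OF X(2)] X(3) by simp
  have "desc_set (induced M A) X = A" using desc_set_induced_desc_closed[OF fg_dc_desc_closed[OF assms] XA] X(3) by simp
  then show ?thesis unfolding fin_gen_def using X(1) XA by auto
qed

lemma countable_fg_dc:
  assumes "countable (verts M)"
  shows "countable {A. fg_dc M A}"
proof -
  have "{A. fg_dc M A} = desc_set M ` {X. finite X \<and> X \<subseteq> verts M}"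
  proof
    show "{A. fg_dc M A} \<subseteq> desc_set M ` {X. finite X \<and> X \<subseteq> verts M}"
    proof
      fix A assume "A \<in> {A. fg_dc M A}"
      then obtain X where "finite X" "X \<subseteq> verts M" "A = desc_set M X" using fg_dc_iff[of M A] by blast
      then show "A \<in> desc_set M ` {X. finite X \<and> X \<subseteq> verts M}" by blast
    qed
    show "desc_set M ` {X. finite X \<and> X \<subseteq> verts M} \<subseteq> {A. fg_dc M A}"
      using fg_dc_iff[of M] by blast
  qed
  then show ?thesis using countable_Collect_finite_subset[OF assms] by simp
qed

lemma age_dh_copy:
  assumes "desc_homogeneous M" "fg_dc M A"
  shows "\<exists>(\<iota> :: 'a \<Rightarrow> nat) E. dg_iso \<iota> (induced M A) E \<and> E \<in> age_dh M"
proof -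
  have w: "wf_digraph (induced M A)" using wf_digraph_induced[OF desc_homogeneous_wf[OF assms(1)]] .
  have c: "countable (verts (induced M A))"
    using countable_subset[OF fg_dc_subset_verts[OF assms(2)] desc_homogeneous_countable[OF assms(1)]] by simp
  obtain \<iota> :: "'a \<Rightarrow> nat" and E where E: "dg_iso \<iota> (induced M A) E" "wf_digraph E"
    using countable_dg_iso_nat[OF w c] by blast
  have "isomorphic E (induced M A)" using isomorphic_sym E(1) unfolding isomorphic_def by blast
  then have "E \<in> age_dh M" unfolding age_dh_def using E(2) assms(2) by blast
  then show ?thesis using E(1) by blast
qed

lemma age_dhE:
  assumes "D \<in> age_dh M"
  obtains h A where "fg_dc M A" "dg_iso h D (induced M A)" "le_emb h D M" "h ` verts D = A" "wf_digraph D"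
proof -
  obtain A where A: "fg_dc M A" "isomorphic D (induced M A)" "wf_digraph D"
    using assms unfolding age_dh_def by blast
  then obtain h where h: "dg_iso h D (induced M A)" unfolding isomorphic_def by blast
  have "le_emb h D M" using dg_iso_induced_le_emb[OF h fg_dc_desc_closed[OF A(1)]] .
  moreover have "h ` verts D = A" using dg_iso_image[OF h] by simp
  ultimately show ?thesis using that A h by blast
qed

lemma fg_dc_add_vertex:
  assumes "fg_dc M A" "x \<in> verts M"
  obtains A' where "fg_dc M A'" "A \<subseteq> A'" "x \<in> A'"
proof -
  obtain X where X: "finite X" "X \<subseteq> verts M" "A = desc_set M X"
    using assms(1) unfolding fg_dc_iff by blast
  have "fg_dc M (desc_set M (X \<union> {x}))"
    unfolding fg_dc_iff by (rule exI[of _ "X \<union> {x}"]) (use X assms(2) in simp)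
  moreover have "A \<subseteq> desc_set M (X \<union> {x})" unfolding X(3) desc_set_Un by blast
  moreover have "x \<in> desc_set M (X \<union> {x})" using desc_set_superset[of "X \<union> {x}" M] X assms(2) by blast
  ultimately show ?thesis by (rule that)
qed

text \<open>Homogeneity of \<open>M\<^sub>2\<close> moves any copy of \<open>A'\<close> in \<open>M\<^sub>2\<close> onto one that agrees with \<open>f\<close> on \<open>A\<close>.\<close>

lemma piso_extend_if_desc_homogeneous:
  assumes hom: "desc_homogeneous M2" and g: "piso M1 M2 A B f"
    and A': "fg_dc M1 A'" "A \<subseteq> A'"
    and P: "fg_dc M2 P" "dg_iso \<beta> (induced M1 A') (induced M2 P)"
  shows "\<exists>B' f'. piso M1 M2 A' B' f' \<and> (\<forall>a\<in>A. f' a = f a)"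
proof -
  have lb: "le_emb \<beta> (induced M1 A') M2" using dg_iso_induced_le_emb[OF P(2) fg_dc_desc_closed[OF P(1)]] .
  have Afg: "fg_dc (induced M1 A') A"
    using fg_dc_induced[OF fg_dc_desc_closed[OF A'(1)]] g A'(2) unfolding piso_def by blast
  have isoA: "dg_iso \<beta> (induced M1 A) (induced M2 (\<beta> ` A))"
  proof -
    have "dg_iso \<beta> (induced (induced M1 A') A) (induced (induced M2 P) (\<beta> ` A))"
      using dg_iso_induced[OF P(2)] A'(2) by simp
    moreover have "\<beta> ` A \<subseteq> P" using dg_iso_image[OF P(2)] A'(2) by auto
    ultimately show ?thesis using A'(2) by (simp add: induced_induced)
  qed
  define \<theta> where "\<theta> = f \<circ> inv_into A \<beta>"
  have th: "dg_iso \<theta> (induced M2 (\<beta> ` A)) (induced M2 B)"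
    unfolding \<theta>_def using dg_iso_comp[OF dg_iso_inv[OF isoA] piso_dg_iso[OF g]] by simp
  obtain \<phi> where phi: "dg_iso \<phi> M2 M2" "\<forall>y\<in>\<beta> ` A. \<phi> y = \<theta> y"
    using desc_homogeneous_extend[OF hom le_emb_fg_dc[OF lb Afg] _ th] g unfolding piso_def by blast
  have "piso M1 M2 A' (\<phi> ` P) (\<phi> \<circ> \<beta>)"
    unfolding piso_def using A'(1) dg_iso_fg_dc[OF phi(1) P(1)]
      dg_iso_comp[OF P(2) dg_iso_induced[OF phi(1) fg_dc_subset_verts[OF P(1)]]] by (intro conjI)
  moreover have "(\<phi> \<circ> \<beta>) a = f a" if a: "a \<in> A" for a
  proof -
    have "\<phi> (\<beta> a) = f (inv_into A \<beta> (\<beta> a))" using phi(2) a by (simp add: \<theta>_def)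
    then show ?thesis using dg_iso_inv_f[OF isoA] a by simp
  qed
  ultimately show ?thesis by blast
qed

lemma forth_if_desc_homogeneous:
  assumes hom: "desc_homogeneous M2"
    and emb: "\<And>A. fg_dc M1 A \<Longrightarrow> \<exists>P \<beta>. fg_dc M2 P \<and> dg_iso \<beta> (induced M1 A) (induced M2 P)"
  shows "forth M1 M2"
  unfolding forth_def
proof (intro allI impI, elim conjE)
  fix A B f x assume g: "piso M1 M2 A B f" and x: "x \<in> verts M1"
  obtain A' where A': "fg_dc M1 A'" "A \<subseteq> A'" "x \<in> A'"
    using fg_dc_add_vertex[OF _ x] g unfolding piso_def by blast
  obtain P \<beta> where "fg_dc M2 P" "dg_iso \<beta> (induced M1 A') (induced M2 P)" using emb[OF A'(1)] by blast
  then obtain B' f' where "piso M1 M2 A' B' f'" "\<forall>a\<in>A. f' a = f a"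
    using piso_extend_if_desc_homogeneous[OF hom g A'(1,2)] by blast
  then show "\<exists>A' B' f'. piso M1 M2 A' B' f' \<and> A \<subseteq> A' \<and> x \<in> A' \<and> (\<forall>a\<in>A. f' a = f a)"
    using A' by blast
qed

lemma fg_dc_embeds_if_age_dh_subset:
  assumes h1: "desc_homogeneous M1" and sub: "age_dh M1 \<subseteq> age_dh M2" and "fg_dc M1 A"
  shows "\<exists>P \<beta>. fg_dc M2 P \<and> dg_iso \<beta> (induced M1 A) (induced M2 P)"
proof -
  obtain \<iota> :: "'a \<Rightarrow> nat" and E where E: "dg_iso \<iota> (induced M1 A) E" "E \<in> age_dh M1"
    using age_dh_copy[OF h1 assms(3)] by blast
  then have "E \<in> age_dh M2" using sub by blast
  then obtain h P where "fg_dc M2 P" "dg_iso h E (induced M2 P)" by (rule age_dhE)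
  then show ?thesis using dg_iso_comp[OF E(1)] by blast
qed

theorem desc_homogeneous_unique:
  assumes h1: "desc_homogeneous M1" and h2: "desc_homogeneous M2" and eq: "age_dh M1 = age_dh M2"
  shows "isomorphic M1 M2"
proof -
  have f1: "forth M1 M2" using forth_if_desc_homogeneous[OF h2 fg_dc_embeds_if_age_dh_subset[OF h1]] eq by blast
  have f2: "forth M2 M1" using forth_if_desc_homogeneous[OF h1 fg_dc_embeds_if_age_dh_subset[OF h2]] eq by blast
  have g0: "piso M1 M2 {} {} f" for f :: "'a \<Rightarrow> 'b"
    unfolding piso_def dg_iso_def using fg_dc_empty[of M1] fg_dc_empty[of M2] by (simp add: bij_betw_def)
  obtain g where "dg_iso g M1 M2"
    using back_and_forth[OF desc_homogeneous_countable[OF h1] desc_homogeneous_countable[OF h2] f1 f2 g0] by blast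
  then show ?thesis unfolding isomorphic_def by blast
qed

lemma emb_iso_sym:
  assumes "emb_iso A f B g B" "le_emb f A B"
  shows "emb_iso A g B f B"
proof -
  obtain h where h: "dg_iso h B B" "\<forall>x\<in>verts A. g x = h (f x)" using assms(1) unfolding emb_iso_def by blast
  have "\<forall>x\<in>verts A. f x = inv_into (verts B) h (g x)"
    using h(2) dg_iso_inv_f[OF h(1)] le_emb_mem[OF assms(2)] by simp
  then show ?thesis unfolding emb_iso_def using dg_iso_inv[OF h(1)] by blast
qed

lemma emb_iso_trans:
  assumes "emb_iso A f B g B" "emb_iso A g B k B"
  shows "emb_iso A f B k B"
proof -
  obtain h where h: "dg_iso h B B" "\<forall>x\<in>verts A. g x = h (f x)" using assms(1) unfolding emb_iso_def by blast
  obtain h' where h': "dg_iso h' B B" "\<forall>x\<in>verts A. k x = h' (g x)" using assms(2) unfolding emb_iso_def by blast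
  have "\<forall>x\<in>verts A. k x = (h' \<circ> h) (f x)" using h(2) h'(2) by simp
  then show ?thesis unfolding emb_iso_def using dg_iso_comp[OF h(1) h'(1)] by blast
qed

lemma countable_emb_types:
  assumes "countable K" and key_in: "\<And>f. le_emb f A B \<Longrightarrow> key f \<in> K"
    and key_eq: "\<And>f g. le_emb f A B \<Longrightarrow> le_emb g A B \<Longrightarrow> key f = key g \<Longrightarrow> emb_iso A f B g B"
  shows "countable (emb_types A B)"
proof -
  define cls where "cls f = {g. le_emb g A B \<and> emb_iso A f B g B}" for f
  have cls_eq: "cls f = cls g" if f: "le_emb f A B" and g: "le_emb g A B" and k: "key f = key g" for f g
  proof -
    have fg: "emb_iso A f B g B" using key_eq[OF f g k] .
    have gf: "emb_iso A g B f B" using emb_iso_sym[OF fg f] .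
    show ?thesis unfolding cls_def using emb_iso_trans[OF fg] emb_iso_trans[OF gf] by blast
  qed
  define pick where "pick k = (SOME f. le_emb f A B \<and> key f = k)" for k
  have "emb_types A B \<subseteq> (\<lambda>k. cls (pick k)) ` K"
  proof
    fix T assume "T \<in> emb_types A B"
    then obtain f where f: "le_emb f A B" "T = cls f" unfolding emb_types_def cls_def by blast
    have "le_emb (pick (key f)) A B \<and> key (pick (key f)) = key f"
      unfolding pick_def by (rule someI[of _ f]) (use f in simp)
    then have "cls (pick (key f)) = cls f" using cls_eq[OF _ f(1)] by blast
    then show "T \<in> (\<lambda>k. cls (pick k)) ` K" using f key_in by blast
  qed
  then show ?thesis using countable_image[OF assms(1)] countable_subset by blast
qed

text \<open>The witness is \<open>\<beta>\<^sup>-\<^sup>1 \<circ> \<psi> \<circ> \<phi>\<^sup>-\<^sup>1 \<circ> \<beta>\<close>.\<close>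

lemma emb_iso_if_conjugates:
  assumes a: "le_emb \<alpha> A M" and b: "le_emb \<beta> B M" and g: "le_emb g A B"
    and \<phi>: "dg_iso \<phi> M M" "\<And>x. x \<in> verts A \<Longrightarrow> \<phi> (\<alpha> x) = \<beta> (f x)"
    and \<psi>: "dg_iso \<psi> M M" "\<And>x. x \<in> verts A \<Longrightarrow> \<psi> (\<alpha> x) = \<beta> (g x)"
    and eq: "inv_into (verts M) \<phi> ` \<beta> ` verts B = inv_into (verts M) \<psi> ` \<beta> ` verts B"
  shows "emb_iso A f B g B"
proof -
  let ?P = "\<beta> ` verts B" and ?\<phi>' = "inv_into (verts M) \<phi>"
  have ib: "dg_iso \<beta> B (induced M ?P)" using le_emb_dg_iso[OF b] .
  have PM: "?P \<subseteq> verts M" using le_emb_image_subset[OF b] .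
  have r1: "dg_iso ?\<phi>' (induced M ?P) (induced M (?\<phi>' ` ?P))"
    using dg_iso_induced[OF dg_iso_inv[OF \<phi>(1)] PM] .
  have "\<psi> ` ?\<phi>' ` ?P = ?P"
    using eq dg_iso_f_inv[OF \<psi>(1)] PM by (force simp: image_image)
  moreover have "?\<phi>' ` ?P \<subseteq> verts M" using dg_iso_image[OF dg_iso_inv[OF \<phi>(1)]] PM by blast
  ultimately have r2: "dg_iso \<psi> (induced M (?\<phi>' ` ?P)) (induced M ?P)"
    using dg_iso_induced[OF \<psi>(1)] by metis
  define h where "h = inv_into (verts B) \<beta> \<circ> (\<psi> \<circ> (?\<phi>' \<circ> \<beta>))"
  have "dg_iso h B B" unfolding h_def
    using dg_iso_comp[OF dg_iso_comp[OF dg_iso_comp[OF ib r1] r2] dg_iso_inv[OF ib]]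
    by (simp add: comp_assoc)
  moreover have "g x = h (f x)" if x: "x \<in> verts A" for x
  proof -
    have "?\<phi>' (\<beta> (f x)) = \<alpha> x"
      using \<phi>(2)[OF x] dg_iso_inv_f[OF \<phi>(1) le_emb_mem[OF a x]] by simp
    then have "h (f x) = inv_into (verts B) \<beta> (\<beta> (g x))" unfolding h_def using \<psi>(2)[OF x] by simp
    then show ?thesis using dg_iso_inv_f[OF ib le_emb_mem[OF g x]] by simp
  qed
  ultimately show ?thesis unfolding emb_iso_def by blast
qed

context
  fixes M :: "'a digraph"
  assumes hom: "desc_homogeneous M"
begin

lemma countable_iso_types_age_dh: "countable (iso_types (age_dh M))"
proof -
  let ?C = "age_dh M"
  have sub: "iso_types ?C \<subseteq> (\<lambda>A. {D' \<in> ?C. isomorphic (induced M A) D'}) ` {A. fg_dc M A}"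
  proof
    fix T assume "T \<in> iso_types ?C"
    then obtain D where D: "D \<in> ?C" "T = {D' \<in> ?C. isomorphic D D'}" unfolding iso_types_def by blast
    obtain A where A: "fg_dc M A" "isomorphic D (induced M A)" using D(1) unfolding age_dh_def by blast
    have "{D' \<in> ?C. isomorphic D D'} = {D' \<in> ?C. isomorphic (induced M A) D'}"
      using isomorphic_trans[OF isomorphic_sym[OF A(2)]] isomorphic_trans[OF A(2)] by blast
    then show "T \<in> (\<lambda>A. {D' \<in> ?C. isomorphic (induced M A) D'}) ` {A. fg_dc M A}" using A(1) D(2) by blast
  qed
  have "countable ((\<lambda>A. {D' \<in> ?C. isomorphic (induced M A) D'}) ` {A. fg_dc M A})"
    using countable_fg_dc[OF desc_homogeneous_countable[OF hom]] by (rule countable_image)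
  then show ?thesis by (rule countable_subset[OF sub])
qed

lemma cond1_age_dh: "cond1 (age_dh M)"
  unfolding cond1_def
proof (intro conjI ballI allI impI)
  fix D assume D: "D \<in> age_dh M"
  obtain h A where h: "fg_dc M A" "dg_iso h D (induced M A)" "wf_digraph D" using age_dhE[OF D] by blast
  have hi: "dg_iso (inv_into (verts D) h) (induced M A) D" using dg_iso_inv[OF h(2)] .
  show "wf_digraph D" using h(3) .
  have "countable (verts (induced M A))"
    using countable_subset[OF fg_dc_subset_verts[OF h(1)] desc_homogeneous_countable[OF hom]] by simp
  then show "countable (verts D)" using dg_iso_countable[OF hi] by blast
  show "fin_gen D" using dg_iso_fin_gen[OF hi fin_gen_induced[OF h(1)]] .
next
  fix D D' :: "nat digraph" assume D: "D \<in> age_dh M" and D': "wf_digraph D' \<and> isomorphic D D'"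
  obtain A where A: "fg_dc M A" "isomorphic D (induced M A)" using D unfolding age_dh_def by blast
  have "isomorphic D' (induced M A)" using isomorphic_trans[OF isomorphic_sym A(2)] D' by blast
  then show "D' \<in> age_dh M" unfolding age_dh_def using D' A(1) by blast
next
  show "countable (iso_types (age_dh M))" by (rule countable_iso_types_age_dh)
qed

lemma age_dh_fin_gen: "D \<in> age_dh M \<Longrightarrow> fin_gen D"
  using cond1_age_dh unfolding cond1_def by blast

lemma cond2_age_dh: "cond2 (age_dh M)"
  unfolding cond2_def
proof (intro ballI allI impI)
  fix D A' assume D: "D \<in> age_dh M" and A': "fg_dc D A'"
  obtain h A where h: "fg_dc M A" "dg_iso h D (induced M A)" "wf_digraph D" using age_dhE[OF D] by blast
  have sub: "A' \<subseteq> verts D" using fg_dc_subset_verts[OF A'] .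
  have "fg_dc (induced M A) (h ` A')" using dg_iso_fg_dc[OF h(2) A'] .
  then have "fg_dc M (h ` A')" using fg_dc_from_induced[OF fg_dc_desc_closed[OF h(1)]] by blast
  moreover have "h ` A' \<subseteq> A" using dg_iso_image[OF h(2)] sub by auto
  then have "dg_iso h (induced D A') (induced M (h ` A'))"
    using dg_iso_induced[OF h(2) sub] by (simp add: induced_induced)
  ultimately show "induced D A' \<in> age_dh M"
    unfolding age_dh_def isomorphic_def using wf_digraph_induced[OF h(3)] by blast
qed

lemma le_emb_conjugate:
  assumes A: "fin_gen A" and k1: "le_emb \<kappa>1 A M" and k2: "le_emb \<kappa>2 A M"
  obtains \<phi> where "dg_iso \<phi> M M" "\<And>x. x \<in> verts A \<Longrightarrow> \<phi> (\<kappa>1 x) = \<kappa>2 x"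
proof -
  have i1: "dg_iso \<kappa>1 A (induced M (\<kappa>1 ` verts A))" using le_emb_dg_iso[OF k1] .
  have "dg_iso (\<kappa>2 \<circ> inv_into (verts A) \<kappa>1) (induced M (\<kappa>1 ` verts A)) (induced M (\<kappa>2 ` verts A))"
    using dg_iso_comp[OF dg_iso_inv[OF i1] le_emb_dg_iso[OF k2]] .
  then obtain \<phi> where phi: "dg_iso \<phi> M M" "\<forall>y\<in>\<kappa>1 ` verts A. \<phi> y = (\<kappa>2 \<circ> inv_into (verts A) \<kappa>1) y"
    using desc_homogeneous_extend[OF hom le_emb_fg_dc[OF k1] le_emb_fg_dc[OF k2]]
      fin_gen_fg_dc_verts[OF A] by blast
  moreover have "\<phi> (\<kappa>1 x) = \<kappa>2 x" if "x \<in> verts A" for x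
    using phi(2) dg_iso_inv_f[OF i1 that] that by simp
  ultimately show ?thesis using that by blast
qed

lemma cond3_age_dh: "cond3 (age_dh M)"
  unfolding cond3_def
proof (intro ballI allI impI, elim conjE)
  fix A B1 B2 f1 f2
  assume A: "A \<in> age_dh M" and B1: "B1 \<in> age_dh M" and B2: "B2 \<in> age_dh M"
    and f1: "le_emb f1 A B1" and f2: "le_emb f2 A B2"
  obtain \<beta>1 P1 where b1: "fg_dc M P1" "le_emb \<beta>1 B1 M" "\<beta>1 ` verts B1 = P1" using age_dhE[OF B1] by metis
  obtain \<beta>2 P2 where b2: "fg_dc M P2" "le_emb \<beta>2 B2 M" "\<beta>2 ` verts B2 = P2" using age_dhE[OF B2] by metis
  obtain \<phi> where phi: "dg_iso \<phi> M M" "\<And>x. x \<in> verts A \<Longrightarrow> \<phi> (\<beta>1 (f1 x)) = \<beta>2 (f2 x)"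
    using le_emb_conjugate[OF age_dh_fin_gen[OF A] le_emb_comp[OF f1 b1(2)] le_emb_comp[OF f2 b2(2)]]
    by auto
  define U where "U = \<phi> ` P1 \<union> P2"
  have U: "fg_dc M U" unfolding U_def using fg_dc_Un[OF dg_iso_fg_dc[OF phi(1) b1(1)] b2(1)] .
  obtain \<iota> :: "'a \<Rightarrow> nat" and E where E: "dg_iso \<iota> (induced M U) E" "E \<in> age_dh M"
    using age_dh_copy[OF hom U] by blast
  have UM: "U \<subseteq> verts M" using fg_dc_subset_verts[OF U] .
  have "(\<phi> \<circ> \<beta>1) ` verts B1 \<subseteq> U" unfolding U_def using b1(3) by (auto simp: image_comp[symmetric])
  then have "le_emb (\<phi> \<circ> \<beta>1) B1 (induced M U)"
    using le_emb_into_induced[OF le_emb_comp[OF b1(2) dg_iso_le_emb[OF phi(1)]] _ UM] by blast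
  then have g1: "le_emb (\<iota> \<circ> (\<phi> \<circ> \<beta>1)) B1 E" using le_emb_comp dg_iso_le_emb[OF E(1)] by blast
  have "\<beta>2 ` verts B2 \<subseteq> U" unfolding U_def using b2(3) by auto
  then have "le_emb \<beta>2 B2 (induced M U)" using le_emb_into_induced[OF b2(2) _ UM] by blast
  then have g2: "le_emb (\<iota> \<circ> \<beta>2) B2 E" using le_emb_comp dg_iso_le_emb[OF E(1)] by blast
  have "\<forall>x\<in>verts A. (\<iota> \<circ> (\<phi> \<circ> \<beta>1)) (f1 x) = (\<iota> \<circ> \<beta>2) (f2 x)" using phi(2) by simp
  then show "\<exists>E\<in>age_dh M. \<exists>g1 g2. le_emb g1 B1 E \<and> le_emb g2 B2 E \<and> (\<forall>x\<in>verts A. g1 (f1 x) = g2 (f2 x))"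
    using E(2) g1 g2 by blast
qed

text \<open>The key of \<open>f\<close> is \<open>\<phi>\<^sub>f\<^sup>-\<^sup>1(\<beta>(B))\<close> for an automorphism \<open>\<phi>\<^sub>f\<close> of \<open>M\<close> with
  \<open>\<phi>\<^sub>f \<circ> \<alpha> = \<beta> \<circ> f\<close>, where \<open>\<alpha> : A \<rightarrow> M\<close> and \<open>\<beta> : B \<rightarrow> M\<close> are fixed.\<close>

lemma le_emb_classified_by_fg_dc:
  assumes A: "A \<in> age_dh M" and B: "B \<in> age_dh M"
  obtains key where "\<And>f. le_emb f A B \<Longrightarrow> fg_dc M (key f)"
    "\<And>f g. le_emb f A B \<Longrightarrow> le_emb g A B \<Longrightarrow> key f = key g \<Longrightarrow> emb_iso A f B g B"
proof -
  obtain \<alpha> where a: "le_emb \<alpha> A M" using age_dhE[OF A] by metis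
  obtain \<beta> PB where b: "fg_dc M PB" "le_emb \<beta> B M" "\<beta> ` verts B = PB" using age_dhE[OF B] by metis
  define \<phi> where "\<phi> f = (SOME p. dg_iso p M M \<and> (\<forall>x\<in>verts A. p (\<alpha> x) = \<beta> (f x)))" for f
  define key where "key f = inv_into (verts M) (\<phi> f) ` PB" for f
  have phi: "dg_iso (\<phi> f) M M" "\<And>x. x \<in> verts A \<Longrightarrow> \<phi> f (\<alpha> x) = \<beta> (f x)" if f: "le_emb f A B" for f
  proof -
    obtain p where "dg_iso p M M" "\<And>x. x \<in> verts A \<Longrightarrow> p (\<alpha> x) = (\<beta> \<circ> f) x"
      using le_emb_conjugate[OF age_dh_fin_gen[OF A] a le_emb_comp[OF f b(2)]] by blast
    then have "\<exists>p. dg_iso p M M \<and> (\<forall>x\<in>verts A. p (\<alpha> x) = \<beta> (f x))" by auto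
    then have "dg_iso (\<phi> f) M M \<and> (\<forall>x\<in>verts A. \<phi> f (\<alpha> x) = \<beta> (f x))"
      unfolding \<phi>_def by (rule someI_ex)
    then show "dg_iso (\<phi> f) M M" "\<And>x. x \<in> verts A \<Longrightarrow> \<phi> f (\<alpha> x) = \<beta> (f x)" by auto
  qed
  show ?thesis
  proof
    show "fg_dc M (key f)" if f: "le_emb f A B" for f
      unfolding key_def using dg_iso_fg_dc[OF dg_iso_inv[OF phi(1)[OF f]] b(1)] .
    show "emb_iso A f B g B" if f: "le_emb f A B" and g: "le_emb g A B" and "key f = key g" for f g
      using emb_iso_if_conjugates[OF a b(2) g phi[OF f] phi[OF g]] \<open>key f = key g\<close> b(3)
      unfolding key_def by simp
  qed
qed

lemma cond4_age_dh: "cond4 (age_dh M)"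
  unfolding cond4_def
proof (intro ballI)
  fix A B assume "A \<in> age_dh M" "B \<in> age_dh M"
  then obtain key where "\<And>f. le_emb f A B \<Longrightarrow> key f \<in> {K. fg_dc M K}"
    "\<And>f g. le_emb f A B \<Longrightarrow> le_emb g A B \<Longrightarrow> key f = key g \<Longrightarrow> emb_iso A f B g B"
    by (metis le_emb_classified_by_fg_dc mem_Collect_eq)
  then show "countable (emb_types A B)"
    using countable_emb_types countable_fg_dc[OF desc_homogeneous_countable[OF hom]] by blast
qed

end

section \<open>The limit of an amalgamation class\<close>

lemma le_emb_id_subdigraph:
  assumes "le_emb (\<lambda>x. x) N N'" "wf_digraph N"
  shows "verts N \<subseteq> verts N'" "induced N' (verts N) = N" "desc_closed (verts N) N'"
proof -
  show "verts N \<subseteq> verts N'" using le_emb_image_subset[OF assms(1)] by simp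
  have "edges N' \<inter> (verts N \<times> verts N) = edges N"
  proof
    show "edges N' \<inter> verts N \<times> verts N \<subseteq> edges N"
      using le_emb_edge[OF assms(1)] by auto
    show "edges N \<subseteq> edges N' \<inter> verts N \<times> verts N"
      using le_emb_edge[OF assms(1)] wf_digraph_edge_verts[OF assms(2)] by auto
  qed
  then show "induced N' (verts N) = N" by (simp add: induced_def verts_def edges_def)
  show "desc_closed (verts N) N'" using le_emb_desc_closed[OF assms(1)] by simp
qed

text \<open>Vertices created at stage \<open>n\<close> of the construction are the codes \<open>prod_encode (n, v)\<close>, so they
  are fresh with respect to all earlier stages.\<close>

lemma relabel_fresh:
  fixes g :: "nat \<Rightarrow> nat"
  assumes inj: "inj_on g V" and V: "V \<subseteq> {v. fst (prod_decode v) < n}"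
  obtains \<rho> where "inj_on \<rho> W" "\<And>x. x \<in> V \<Longrightarrow> \<rho> (g x) = x"
    "\<rho> ` W \<subseteq> V \<union> {v. fst (prod_decode v) = n}"
proof
  define \<rho> where "\<rho> v = (if v \<in> g ` V then inv_into V g v else prod_encode (n, v))" for v
  show rho_g: "\<rho> (g x) = x" if "x \<in> V" for x
    using that inj unfolding \<rho>_def by auto
  have old: "\<rho> v \<in> V" if "v \<in> g ` V" for v
    using that unfolding \<rho>_def by (auto intro: inv_into_into)
  have new: "\<rho> v = prod_encode (n, v)" if "v \<notin> g ` V" for v
    using that unfolding \<rho>_def by auto
  show "\<rho> ` W \<subseteq> V \<union> {v. fst (prod_decode v) = n}"
    using old new by fastforce
  show "inj_on \<rho> W"
  proof (rule inj_onI)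
    fix u v assume uv: "\<rho> u = \<rho> v"
    have fresh: False if "u' \<in> g ` V" "v' \<notin> g ` V" "\<rho> u' = \<rho> v'" for u' v'
      using old[OF that(1)] new[OF that(2)] that(3) V by auto
    show "u = v"
    proof (cases "u \<in> g ` V"; cases "v \<in> g ` V")
      assume "u \<in> g ` V" "v \<in> g ` V"
      then show ?thesis using uv rho_g by auto
    next
      assume "\<not> u \<in> g ` V" "\<not> v \<in> g ` V"
      then show ?thesis using uv new by simp
    qed (use fresh uv in metis)+
  qed
qed

locale amalgamation_class =
  fixes C :: "nat digraph set"
  assumes C_nonempty: "C \<noteq> {}" and C_cond1: "cond1 C" and C_cond2: "cond2 C"
    and C_cond3: "cond3 C" and C_cond4: "cond4 C"
begin

lemma class_wf: "D \<in> C \<Longrightarrow> wf_digraph D" using C_cond1 unfolding cond1_def by blast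
lemma class_fin_gen: "D \<in> C \<Longrightarrow> fin_gen D" using C_cond1 unfolding cond1_def by blast
lemma class_iso: "D \<in> C \<Longrightarrow> wf_digraph D' \<Longrightarrow> dg_iso h D D' \<Longrightarrow> D' \<in> C"
  using C_cond1 unfolding cond1_def isomorphic_def by blast
lemma class_fg_dc: "D \<in> C \<Longrightarrow> fg_dc D A \<Longrightarrow> induced D A \<in> C" using C_cond2 unfolding cond2_def by blast

lemma class_amalg:
  assumes "A \<in> C" "B1 \<in> C" "B2 \<in> C" "le_emb f1 A B1" "le_emb f2 A B2"
  shows "\<exists>E\<in>C. \<exists>g1 g2. le_emb g1 B1 E \<and> le_emb g2 B2 E \<and> (\<forall>x\<in>verts A. g1 (f1 x) = g2 (f2 x))"
  using C_cond3 assms unfolding cond3_def by blast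

lemma empty_digraph_in_class: "(({}, {}) :: nat digraph) \<in> C"
proof -
  obtain D where "D \<in> C" using C_nonempty by blast
  then have "induced D {} \<in> C" using class_fg_dc[OF _ fg_dc_empty[of D]] by blast
  moreover have "induced D {} = ({}, {})" by (simp add: induced_def)
  ultimately show ?thesis by simp
qed

definition iso_rep :: "nat \<Rightarrow> nat digraph" where
  "iso_rep i = (SOME D. D \<in> from_nat_into (iso_types C) i)"

lemma iso_rep_exists: "D \<in> C \<Longrightarrow> \<exists>i \<phi>. dg_iso \<phi> D (iso_rep i) \<and> iso_rep i \<in> C"
proof -
  assume D: "D \<in> C"
  let ?t = "{D' \<in> C. isomorphic D D'}"
  have t: "?t \<in> iso_types C" unfolding iso_types_def using D by blast
  have "countable (iso_types C)" using C_cond1 unfolding cond1_def by blast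
  then obtain i where i: "from_nat_into (iso_types C) i = ?t" using from_nat_into_surj[OF _ t] by blast
  have "D \<in> ?t" using D isomorphic_refl[of D] by simp
  then have "iso_rep i \<in> ?t" unfolding iso_rep_def i by (rule someI)
  then have "iso_rep i \<in> C" "isomorphic D (iso_rep i)" by auto
  then show ?thesis unfolding isomorphic_def by blast
qed

lemma iso_rep_in: "iso_rep i \<in> C"
proof -
  have ne: "iso_types C \<noteq> {}" using C_nonempty unfolding iso_types_def by blast
  then have t: "from_nat_into (iso_types C) i \<in> iso_types C" by (rule from_nat_into)
  then obtain D where D: "D \<in> C" "from_nat_into (iso_types C) i = {D' \<in> C. isomorphic D D'}"
    unfolding iso_types_def by blast
  have "D \<in> from_nat_into (iso_types C) i" using D isomorphic_refl[of D] by simp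
  then have "iso_rep i \<in> from_nat_into (iso_types C) i" unfolding iso_rep_def by (rule someI)
  then show ?thesis using D(2) by blast
qed

definition emb_rep :: "nat digraph \<Rightarrow> nat digraph \<Rightarrow> nat \<Rightarrow> (nat \<Rightarrow> nat)" where
  "emb_rep A B j = (SOME f. f \<in> from_nat_into (emb_types A B) j)"

lemma emb_rep_exists:
  assumes "A \<in> C" "B \<in> C" "le_emb e A B"
  shows "\<exists>j. le_emb (emb_rep A B j) A B \<and> emb_iso A e B (emb_rep A B j) B"
proof -
  let ?t = "{g. le_emb g A B \<and> emb_iso A e B g B}"
  have t: "?t \<in> emb_types A B" unfolding emb_types_def using assms(3) by blast
  have "countable (emb_types A B)" using C_cond4 assms unfolding cond4_def by blast
  then obtain j where j: "from_nat_into (emb_types A B) j = ?t" using from_nat_into_surj[OF _ t] by blast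
  have "e \<in> ?t" using assms(3) dg_iso_id[of B] unfolding emb_iso_def by auto
  then have "emb_rep A B j \<in> ?t" unfolding emb_rep_def j by (rule someI[of "\<lambda>f. f \<in> ?t"])
  then show ?thesis by blast
qed

definition absorbs :: "nat digraph \<Rightarrow> nat \<Rightarrow> nat set \<Rightarrow> nat digraph \<Rightarrow> (nat \<Rightarrow> nat) \<Rightarrow> nat digraph \<Rightarrow> bool" where
  "absorbs N n A B f N' \<longleftrightarrow> N' \<in> C \<and> le_emb (\<lambda>x. x) N N'
     \<and> verts N' \<subseteq> verts N \<union> {v. fst (prod_decode v) = n}
     \<and> (\<exists>g. le_emb g B N' \<and> (\<forall>a\<in>A. g (f a) = a))"

lemma absorbs_exists:
  assumes N: "N \<in> C" and Nv: "verts N \<subseteq> {v. fst (prod_decode v) < n}"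
    and A: "fg_dc N A" and B: "B \<in> C" and f: "le_emb f (induced N A) B"
  shows "\<exists>N'. absorbs N n A B f N'"
proof -
  have Ai: "induced N A \<in> C" using class_fg_dc[OF N A] .
  have inc: "le_emb (\<lambda>x. x) (induced N A) N" using le_emb_inclusion[OF fg_dc_desc_closed[OF A]] .
  obtain E g1 g2 where E: "E \<in> C" "le_emb g1 N E" "le_emb g2 B E" "\<forall>x\<in>A. g1 x = g2 (f x)"
    using class_amalg[OF Ai N B inc f] by auto
  obtain \<rho> where \<rho>: "inj_on \<rho> (verts E)" "\<And>x. x \<in> verts N \<Longrightarrow> \<rho> (g1 x) = x"
    "\<rho> ` verts E \<subseteq> verts N \<union> {v. fst (prod_decode v) = n}"
    using relabel_fresh[OF le_emb_inj[OF E(2)] Nv] by blast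
  define N' where "N' = map_digraph \<rho> E"
  have iso: "dg_iso \<rho> E N'" and wfN': "wf_digraph N'"
    unfolding N'_def using dg_iso_map_digraph[OF class_wf[OF E(1)] \<rho>(1)] by auto
  have "le_emb (\<rho> \<circ> g1) N N'" using le_emb_comp[OF E(2) dg_iso_le_emb[OF iso]] .
  then have "le_emb (\<lambda>x. x) N N'" using le_emb_cong \<rho>(2) by fastforce
  moreover have "verts N' \<subseteq> verts N \<union> {v. fst (prod_decode v) = n}"
    using \<rho>(3) dg_iso_image[OF iso] by blast
  moreover have "le_emb (\<rho> \<circ> g2) B N'" using le_emb_comp[OF E(3) dg_iso_le_emb[OF iso]] .
  moreover have "(\<rho> \<circ> g2) (f a) = a" if "a \<in> A" for a
    using E(4) \<rho>(2) that fg_dc_subset_verts[OF A] by force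
  ultimately show ?thesis unfolding absorbs_def using class_iso[OF E(1) wfN' iso] by blast
qed

text \<open>Task \<open>c\<close> decodes to a finite set \<open>X\<close>, an isomorphism type \<open>B = iso_rep i\<close> and an embedding
  type \<open>j\<close> of \<open>desc_set N X\<close> into \<open>B\<close>; tasks that do not make sense for \<open>N\<close> are skipped.\<close>

definition ext_step :: "nat digraph \<Rightarrow> nat \<Rightarrow> nat \<Rightarrow> nat digraph" where
  "ext_step N n c = (let t = (from_nat c :: nat list \<times> nat \<times> nat); X = set (fst t);
      A = desc_set N X; B = iso_rep (fst (snd t)); f = emb_rep (induced N A) B (snd (snd t)) in
      if X \<subseteq> verts N \<and> le_emb f (induced N A) B then (SOME N'. absorbs N n A B f N') else N)"

lemma ext_step_grows:
  assumes N: "N \<in> C" and Nv: "verts N \<subseteq> {v. fst (prod_decode v) < n}"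
  shows "ext_step N n c \<in> C \<and> le_emb (\<lambda>x. x) N (ext_step N n c) \<and> verts (ext_step N n c) \<subseteq> verts N \<union> {v. fst (prod_decode v) = n}"
proof -
  define t where "t = (from_nat c :: nat list \<times> nat \<times> nat)"
  define X where "X = set (fst t)"
  define A where "A = desc_set N X"
  define B where "B = iso_rep (fst (snd t))"
  define f where "f = emb_rep (induced N A) B (snd (snd t))"
  have S: "ext_step N n c = (if X \<subseteq> verts N \<and> le_emb f (induced N A) B then (SOME N'. absorbs N n A B f N') else N)"
    unfolding ext_step_def Let_def t_def X_def A_def B_def f_def ..
  show ?thesis
  proof (cases "X \<subseteq> verts N \<and> le_emb f (induced N A) B")
    case True
    have A: "fg_dc N A" unfolding A_def fg_dc_iff using True X_def by blast
    have "B \<in> C" unfolding B_def by (rule iso_rep_in)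
    then have "\<exists>N'. absorbs N n A B f N'" using absorbs_exists[OF N Nv A] True by blast
    then have "absorbs N n A B f (SOME N'. absorbs N n A B f N')" by (rule someI_ex)
    moreover have "ext_step N n c = (SOME N'. absorbs N n A B f N')" using S True by simp
    ultimately show ?thesis unfolding absorbs_def by simp
  next
    case False
    then have "ext_step N n c = N" unfolding S by (rule if_not_P)
    then show ?thesis using N dg_iso_le_emb[OF dg_iso_id[of N]] by simp
  qed
qed

lemma ext_step_absorbs:
  assumes N: "N \<in> C" and Nv: "verts N \<subseteq> {v. fst (prod_decode v) < n}"
    and c: "from_nat c = (xs, i, j)" and X: "set xs \<subseteq> verts N"
    and f: "le_emb (emb_rep (induced N (desc_set N (set xs))) (iso_rep i) j) (induced N (desc_set N (set xs))) (iso_rep i)"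
  shows "\<exists>g. le_emb g (iso_rep i) (ext_step N n c) \<and>
     (\<forall>a\<in>desc_set N (set xs). g (emb_rep (induced N (desc_set N (set xs))) (iso_rep i) j a) = a)"
proof -
  let ?A = "desc_set N (set xs)"
  let ?f = "emb_rep (induced N ?A) (iso_rep i) j"
  have S: "ext_step N n c = (SOME N'. absorbs N n ?A (iso_rep i) ?f N')"
    unfolding ext_step_def Let_def c using X f by simp
  have A: "fg_dc N ?A" unfolding fg_dc_iff using X by blast
  have "\<exists>N'. absorbs N n ?A (iso_rep i) ?f N'" using absorbs_exists[OF N Nv A iso_rep_in f] .
  then have "absorbs N n ?A (iso_rep i) ?f (SOME N'. absorbs N n ?A (iso_rep i) ?f N')" by (rule someI_ex)
  then show ?thesis unfolding S absorbs_def by blast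
qed

definition stage :: "nat \<Rightarrow> nat digraph" where
  "stage = rec_nat ({}, {}) (\<lambda>n N. ext_step N (Suc n) (fst (prod_decode n)))"

lemma stage_0: "stage 0 = ({}, {})" by (simp add: stage_def)
lemma stage_Suc: "stage (Suc n) = ext_step (stage n) (Suc n) (fst (prod_decode n))" by (simp add: stage_def)

lemma stage_inv: "stage n \<in> C \<and> verts (stage n) \<subseteq> {v. fst (prod_decode v) < Suc n}"
proof (induction n)
  case 0 then show ?case using empty_digraph_in_class by (simp add: stage_0 verts_def)
next
  case (Suc n)
  then show ?case using ext_step_grows[of "stage n" "Suc n" "fst (prod_decode n)"]
    unfolding stage_Suc by fastforce
qed

lemma stage_in_class: "stage n \<in> C" using stage_inv by blast
lemma stage_wf: "wf_digraph (stage n)" using class_wf[OF stage_in_class] .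
lemma stage_verts: "verts (stage n) \<subseteq> {v. fst (prod_decode v) < Suc n}" using stage_inv by blast

lemma stage_le_emb_Suc: "le_emb (\<lambda>x. x) (stage n) (stage (Suc n))"
  using ext_step_grows[OF stage_in_class stage_verts] unfolding stage_Suc by blast

lemma stage_le_emb: "n \<le> m \<Longrightarrow> le_emb (\<lambda>x. x) (stage n) (stage m)"
proof (induction m rule: dec_induct)
  case base then show ?case using dg_iso_le_emb[OF dg_iso_id] by blast
next
  case (step m)
  then show ?case using le_emb_comp[OF step(3) stage_le_emb_Suc[of m]] by (simp add: comp_def)
qed

lemma stage_verts_mono: "n \<le> m \<Longrightarrow> verts (stage n) \<subseteq> verts (stage m)"
  using le_emb_id_subdigraph(1)[OF stage_le_emb stage_wf] .
lemma stage_induced: "n \<le> m \<Longrightarrow> induced (stage m) (verts (stage n)) = stage n"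
  using le_emb_id_subdigraph(2)[OF stage_le_emb stage_wf] .
lemma stage_desc_closed: "n \<le> m \<Longrightarrow> desc_closed (verts (stage n)) (stage m)"
  using le_emb_id_subdigraph(3)[OF stage_le_emb stage_wf] .

lemma stage_edges: "n \<le> m \<Longrightarrow> edges (stage m) \<inter> (verts (stage n) \<times> verts (stage n)) = edges (stage n)"
proof -
  assume "n \<le> m"
  then have "edges (induced (stage m) (verts (stage n))) = edges (stage n)" using stage_induced by simp
  then show ?thesis by simp
qed

lemma stage_edges_mono: "n \<le> m \<Longrightarrow> edges (stage n) \<subseteq> edges (stage m)"
  using stage_edges by blast

definition limit :: "nat digraph" where
  "limit = ((\<Union>n. verts (stage n)), (\<Union>n. edges (stage n)))"

lemma verts_limit: "verts limit = (\<Union>n. verts (stage n))" by (simp add: limit_def verts_def)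
lemma edges_limit: "edges limit = (\<Union>n. edges (stage n))" by (simp add: limit_def edges_def)

lemma limit_wf: "wf_digraph limit"
  unfolding wf_digraph_def
proof
  show "edges limit \<subseteq> verts limit \<times> verts limit"
  proof
    fix e assume "e \<in> edges limit"
    then obtain n where "e \<in> edges (stage n)" unfolding edges_limit by blast
    then have "e \<in> verts (stage n) \<times> verts (stage n)" using stage_wf[of n] unfolding wf_digraph_def by blast
    then show "e \<in> verts limit \<times> verts limit" unfolding verts_limit by blast
  qed
  show "\<forall>x. (x, x) \<notin> edges limit"
    unfolding edges_limit using stage_wf unfolding wf_digraph_def by blast
qed

lemma limit_edges_stage: "edges limit \<inter> (verts (stage n) \<times> verts (stage n)) = edges (stage n)"
proof
  show "edges (stage n) \<subseteq> edges limit \<inter> verts (stage n) \<times> verts (stage n)"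
    using stage_wf[of n] unfolding edges_limit wf_digraph_def by blast
  show "edges limit \<inter> verts (stage n) \<times> verts (stage n) \<subseteq> edges (stage n)"
  proof
    fix e assume e: "e \<in> edges limit \<inter> verts (stage n) \<times> verts (stage n)"
    then obtain m where m: "e \<in> edges (stage m)" unfolding edges_limit by blast
    have "e \<in> edges (stage (max n m))" using m stage_edges_mono[of m "max n m"] by auto
    then show "e \<in> edges (stage n)" using e stage_edges[of n "max n m"] by auto
  qed
qed

lemma limit_induced_stage: "induced limit (verts (stage n)) = stage n"
  using limit_edges_stage[of n] by (simp add: induced_def verts_def edges_def)

lemma stage_desc_closed_limit: "desc_closed (verts (stage n)) limit"
  unfolding desc_closed_def
proof (intro conjI ballI)
  show "verts (stage n) \<subseteq> verts limit" unfolding verts_limit by blast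
  fix x assume x: "x \<in> verts (stage n)"
  have "(x, y) \<in> (arc_rel limit)\<^sup>* \<Longrightarrow> y \<in> verts (stage n)" for y
  proof (induction rule: rtrancl_induct)
    case base then show ?case using x .
  next
    case (step y z)
    obtain m where m: "(y, z) \<in> edges (stage m)" using step(2) unfolding arc_rel_def edges_limit by blast
    let ?k = "max n m"
    have e: "(y, z) \<in> edges (stage ?k)" using m stage_edges_mono[of m ?k] by auto
    have yk: "y \<in> verts (stage ?k)" "z \<in> verts (stage ?k)"
      using wf_digraph_edge_verts[OF stage_wf e] by auto
    then have "(y, z) \<in> arc_rel (stage ?k)" using e by (simp add: arc_rel_def)
    then have "z \<in> desc (stage ?k) y" using yk by (simp add: desc_eq_rtrancl)
    then show ?case using desc_closed_desc[OF stage_desc_closed[of n ?k] step(3)] by auto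
  qed
  then show "desc limit x \<subseteq> verts (stage n)" by (auto simp: desc_eq_rtrancl)
qed

lemma stage_le_emb_limit: "le_emb (\<lambda>x. x) (stage n) limit"
  using le_emb_inclusion[OF stage_desc_closed_limit[of n]] unfolding limit_induced_stage .

lemma desc_limit_stage: "x \<in> verts (stage n) \<Longrightarrow> desc limit x = desc (stage n) x"
  using desc_induced_desc_closed[OF stage_desc_closed_limit[of n]] unfolding limit_induced_stage by simp

lemma desc_set_limit_stage: "X \<subseteq> verts (stage n) \<Longrightarrow> desc_set limit X = desc_set (stage n) X"
  unfolding desc_set_def using desc_limit_stage by (metis (no_types, lifting) SUP_cong subsetD)

lemma induced_limit_stage: "A \<subseteq> verts (stage n) \<Longrightarrow> induced limit A = induced (stage n) A"
  using induced_induced[of A "verts (stage n)" limit] unfolding limit_induced_stage by simp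

lemma finite_subset_stage: "finite X \<Longrightarrow> X \<subseteq> verts limit \<Longrightarrow> \<exists>n. X \<subseteq> verts (stage n)"
proof (induction rule: finite_induct)
  case empty then show ?case by simp
next
  case (insert x F)
  then obtain n where n: "F \<subseteq> verts (stage n)" by blast
  obtain m where m: "x \<in> verts (stage m)" using insert(4) unfolding verts_limit by blast
  have "F \<subseteq> verts (stage (max n m))" using n stage_verts_mono[of n "max n m"] by auto
  moreover have "x \<in> verts (stage (max n m))" using m stage_verts_mono[of m "max n m"] by auto
  ultimately show ?case by blast
qed

lemma fg_dc_limit_in_class:
  assumes "fg_dc limit A"
  shows "induced limit A \<in> C"
proof -
  obtain X where X: "finite X" "X \<subseteq> verts limit" "A = desc_set limit X" using assms fg_dc_iff[of limit A] by blast
  obtain n where n: "X \<subseteq> verts (stage n)" using finite_subset_stage[OF X(1,2)] by blast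
  have A: "A = desc_set (stage n) X" using desc_set_limit_stage[OF n] X(3) by simp
  have "fg_dc (stage n) A" unfolding fg_dc_iff using X(1) n A by blast
  then have "induced (stage n) A \<in> C" using class_fg_dc[OF stage_in_class] by blast
  moreover have "induced limit A = induced (stage n) A" using induced_limit_stage desc_set_subset_verts[of "stage n" X] A by simp
  ultimately show ?thesis by simp
qed

text \<open>The task coded by \<open>c\<close> is handled at every stage \<open>n + 1\<close> with \<open>fst (prod_decode n) = c\<close>,
  in particular at one where the finite set \<open>X\<close> is already present.\<close>

lemma limit_absorbs_emb_rep:
  assumes X: "finite X" "X \<subseteq> verts limit"
    and f: "le_emb (emb_rep (induced limit (desc_set limit X)) (iso_rep i) j)
      (induced limit (desc_set limit X)) (iso_rep i)"
  shows "\<exists>g. le_emb g (iso_rep i) limit \<and>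
    (\<forall>a\<in>desc_set limit X. g (emb_rep (induced limit (desc_set limit X)) (iso_rep i) j a) = a)"
proof -
  obtain xs where xs: "set xs = X" using finite_list[OF X(1)] by blast
  define A where "A = desc_set limit X"
  define c where "c = to_nat (xs, i, j)"
  obtain N0 where N0: "X \<subseteq> verts (stage N0)" using finite_subset_stage[OF X] by blast
  define n where "n = prod_encode (c, N0)"
  have Xn: "set xs \<subseteq> verts (stage n)"
    using N0 stage_verts_mono[OF le_prod_encode_2[of N0]] xs unfolding n_def by blast
  then have An: "desc_set (stage n) (set xs) = A" unfolding A_def xs using desc_set_limit_stage by blast
  have indn: "induced (stage n) A = induced limit A"
    using induced_limit_stage desc_set_subset_verts An by metis
  have "fst (prod_decode n) = c" "from_nat c = (xs, i, j)" unfolding n_def c_def by simp_all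
  then obtain g where "le_emb g (iso_rep i) (stage (Suc n))"
    "\<forall>a\<in>A. g (emb_rep (induced limit A) (iso_rep i) j a) = a"
    using ext_step_absorbs[OF stage_in_class stage_verts _ Xn, unfolded An indn] f
    unfolding stage_Suc A_def by metis
  then show ?thesis using le_emb_comp[OF _ stage_le_emb_limit] unfolding A_def comp_def by blast
qed

lemma limit_extension:
  assumes X: "finite X" "X \<subseteq> verts limit" and D: "D \<in> C"
    and e: "le_emb e (induced limit (desc_set limit X)) D"
  shows "\<exists>g. le_emb g D limit \<and> (\<forall>a\<in>desc_set limit X. g (e a) = a)"
proof -
  define A where "A = desc_set limit X"
  have AC: "induced limit A \<in> C" unfolding A_def
    using fg_dc_limit_in_class fg_dc_iff[of limit "desc_set limit X"] X by blast
  obtain i \<phi> where phi: "dg_iso \<phi> D (iso_rep i)" "iso_rep i \<in> C" using iso_rep_exists[OF D] by blast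
  define e' where "e' = \<phi> \<circ> e"
  have e': "le_emb e' (induced limit A) (iso_rep i)"
    unfolding e'_def A_def using le_emb_comp[OF e dg_iso_le_emb[OF phi(1)]] .
  obtain j where j: "le_emb (emb_rep (induced limit A) (iso_rep i) j) (induced limit A) (iso_rep i)"
    "emb_iso (induced limit A) e' (iso_rep i) (emb_rep (induced limit A) (iso_rep i) j) (iso_rep i)"
    using emb_rep_exists[OF AC phi(2) e'] by blast
  obtain g' where g': "le_emb g' (iso_rep i) limit" "\<forall>a\<in>A. g' (emb_rep (induced limit A) (iso_rep i) j a) = a"
    using limit_absorbs_emb_rep[OF X] j(1) unfolding A_def by blast
  obtain h where h: "dg_iso h (iso_rep i) (iso_rep i)" "\<forall>x\<in>A. emb_rep (induced limit A) (iso_rep i) j x = h (e' x)"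
    using j(2) unfolding emb_iso_def by auto
  have "le_emb (g' \<circ> (h \<circ> \<phi>)) D limit"
    using le_emb_comp[OF le_emb_comp[OF dg_iso_le_emb[OF phi(1)] dg_iso_le_emb[OF h(1)]] g'(1)]
    by (simp add: comp_assoc)
  moreover have "(g' \<circ> (h \<circ> \<phi>)) (e a) = a" if "a \<in> A" for a
    using g'(2) h(2) that unfolding e'_def by simp
  ultimately show ?thesis unfolding A_def by blast
qed

lemma limit_forth: "forth limit limit"
  unfolding forth_def
proof (intro allI impI, elim conjE)
  fix A B f x assume g: "piso limit limit A B f" and x: "x \<in> verts limit"
  obtain Y where Y: "finite Y" "Y \<subseteq> verts limit" "B = desc_set limit Y"
    using g unfolding piso_def fg_dc_iff by blast
  obtain A' where A': "fg_dc limit A'" "A \<subseteq> A'" "x \<in> A'"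
    using fg_dc_add_vertex[OF _ x] g unfolding piso_def by blast
  define D where "D = induced limit A'"
  have DC: "D \<in> C" unfolding D_def using fg_dc_limit_in_class[OF A'(1)] .
  define e where "e = inv_into A f"
  have "dg_iso e (induced limit B) (induced limit A)"
    unfolding e_def using dg_iso_inv[OF piso_dg_iso[OF g]] by simp
  moreover have "induced D A = induced limit A" unfolding D_def using induced_induced[OF A'(2)] .
  ultimately have "le_emb e (induced limit B) (induced D A)" using dg_iso_le_emb by simp
  moreover have "desc_closed A limit" using g fg_dc_desc_closed unfolding piso_def by blast
  then have "desc_closed A D"
    unfolding D_def using desc_closed_induced A'(2) fg_dc_subset_verts[OF A'(1)] by blast
  ultimately have "le_emb e (induced limit (desc_set limit Y)) D"
    using le_emb_from_induced Y(3) by blast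
  then obtain h where h: "le_emb h D limit" "\<forall>b\<in>B. h (e b) = b"
    using limit_extension[OF Y(1,2) DC] Y(3) by blast
  have "h a = f a" if a: "a \<in> A" for a
  proof -
    have "f a \<in> B" using piso_image[OF g] a by blast
    moreover have "e (f a) = a" unfolding e_def using piso_inv_into_f[OF g a] .
    ultimately show ?thesis using h(2) by metis
  qed
  moreover have "piso limit limit A' (h ` A') h"
  proof -
    have "fg_dc D A'" using fin_gen_fg_dc_verts[OF fin_gen_induced[OF A'(1)]] unfolding D_def by simp
    then show ?thesis
      unfolding piso_def using A'(1) le_emb_fg_dc[OF h(1)] le_emb_dg_iso[OF h(1)] D_def by simp
  qed
  ultimately show "\<exists>A' B' f'. piso limit limit A' B' f' \<and> A \<subseteq> A' \<and> x \<in> A' \<and> (\<forall>a\<in>A. f' a = f a)"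
    using A' by blast
qed

lemma limit_desc_homogeneous: "desc_homogeneous limit"
  unfolding desc_homogeneous_def
proof (intro conjI allI impI)
  show "wf_digraph limit" using limit_wf .
  show "countable (verts limit)" by simp
  fix A B f assume "fg_dc limit A \<and> fg_dc limit B \<and> dg_iso f (induced limit A) (induced limit B)"
  then have "piso limit limit A B f" unfolding piso_def by blast
  then show "\<exists>g. dg_iso g limit limit \<and> (\<forall>x\<in>A. g x = f x)"
    using back_and_forth[OF _ _ limit_forth limit_forth] by simp
qed

lemma age_dh_limit: "age_dh limit = C"
proof
  show "age_dh limit \<subseteq> C"
  proof
    fix D assume "D \<in> age_dh limit"
    then obtain h A where hA: "fg_dc limit A" "dg_iso h D (induced limit A)" "wf_digraph D" by (rule age_dhE)
    have "induced limit A \<in> C" using fg_dc_limit_in_class[OF hA(1)] .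
    then show "D \<in> C" using class_iso[OF _ hA(3) dg_iso_inv[OF hA(2)]] by blast
  qed
  show "C \<subseteq> age_dh limit"
  proof
    fix D assume D: "D \<in> C"
    have e: "le_emb (\<lambda>x. x) (induced limit (desc_set limit {})) D"
      by (rule le_emb_intro) (simp_all add: desc_set_def)
    obtain g where g: "le_emb g D limit" using limit_extension[OF _ _ D e] by auto
    have fg: "fg_dc limit (g ` verts D)" using le_emb_fg_dc[OF g fin_gen_fg_dc_verts[OF class_fin_gen[OF D]]] .
    have "isomorphic D (induced limit (g ` verts D))" using le_emb_dg_iso[OF g] unfolding isomorphic_def by blast
    then show "D \<in> age_dh limit" unfolding age_dh_def using class_wf[OF D] fg by blast
  qed
qed

end

theorem theorem2p2:
  shows "(\<forall>M :: 'a digraph. desc_homogeneous M \<longrightarrow>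
            cond1 (age_dh M) \<and> cond2 (age_dh M) \<and> cond3 (age_dh M) \<and> cond4 (age_dh M))
       \<and> (\<forall>C :: nat digraph set. C \<noteq> {} \<and> cond1 C \<and> cond2 C \<and> cond3 C \<and> cond4 C \<longrightarrow>
            (\<exists>M :: nat digraph. desc_homogeneous M \<and> age_dh M = C)
            \<and> (\<forall>(M1 :: 'b digraph) (M2 :: 'c digraph).
                 desc_homogeneous M1 \<and> age_dh M1 = C \<and> desc_homogeneous M2 \<and> age_dh M2 = C
                 \<longrightarrow> isomorphic M1 M2))"
proof (intro conjI allI impI)
  fix M :: "'a digraph" assume h: "desc_homogeneous M"
  show "cond1 (age_dh M)" using cond1_age_dh[OF h] .
  show "cond2 (age_dh M)" using cond2_age_dh[OF h] .
  show "cond3 (age_dh M)" using cond3_age_dh[OF h] .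
  show "cond4 (age_dh M)" using cond4_age_dh[OF h] .
next
  fix C :: "nat digraph set" assume "C \<noteq> {} \<and> cond1 C \<and> cond2 C \<and> cond3 C \<and> cond4 C"
  then interpret amalgamation_class C by unfold_locales auto
  show "\<exists>M :: nat digraph. desc_homogeneous M \<and> age_dh M = C" using limit_desc_homogeneous age_dh_limit by blast
  fix M1 :: "'b digraph" and M2 :: "'c digraph"
  assume "desc_homogeneous M1 \<and> age_dh M1 = C \<and> desc_homogeneous M2 \<and> age_dh M2 = C"
  then show "isomorphic M1 M2" using desc_homogeneous_unique by metis
qed

end
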